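(* Suppose Assumption (A) holds and, for sufficiently large $m$ (conditionally on the fitted functions), the joint density $h_m(x,u,y,v)$ of $(\mu(Z),\eta_m(Z),\pi(Z),\gamma_m(Z))$ and its derivatives $\partial_xh_m,\partial_yh_m$ exist for all $x,u,y,v$; with $h^Y_m(x,u,y,v)=\int_{-\infty}^yh_m(x,u,\check y,v)\,d\check y$, the derivatives $\partial_xh^Y_m,\partial_x^2h^Y_m$ exist for all $x,u,y,v$; and there exist nonnegative functions $\bar h_{m,i}(u,v),\bar h^Y_{m,i}(u,v)$, $i=0,1,2$, with \[ h_m\le\bar h_{m,0},\ |\partial_xh_m|\le\bar h_{m,1},\ |\partial_yh_m|\le\bar h_{m,2},\quad h_m^Y\le\bar h^Y_{m,0},\ |\partial_xh^Y_m|\le\bar h^Y_{m,1},\ |\partial_x^2h^Y_m|\le\bar h^Y_{m,2} \] for all $x,u,y,v$, and \[ \sup_m\iint(1+|u|+|v|)^r\bar h_{m,i}(u,v)\,du\,dv<\infty,\quad \sup_m\iint(1+|u|+|v|)^r\bar h^Y_{m,i}(u,v)\,du\,dv<\infty \] for $i=0,1,2$ and $r=1,2$. Then if $(x_m,y_m)\to(x,y)$ and $f_\mu(x)\neq0$, \[ \partial_xG_{\tilde\mu_m,\tilde\pi_m}(x_m,y_m)\to\partial_xG_{\mu,\pi}(x,y),\qquad \partial_yG_{\tilde\mu_m,\tilde\pi_m}(x_m,y_m)\to\partial_yG_{\mu,\pi}(x,y). \]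
   Context: Let $Z$ be a random vector with values in $\Omega\subseteq\mathbb{R}^d$ and distribution $P$; $\mu,\pi:\Omega\to\mathbb{R}$ measurable; $f_\mu$ is the density of $\mu(Z)$. For each $m$, $\tilde\mu_m,\tilde\pi_m:\Omega\to\mathbb{R}$ are random functions fitted from a sample independent of $Z$; $\Pr_m$ is probability conditional on them (with $Z\sim P$). $G_{\mu,\pi}(x,y)=\Pr\{\pi(Z)\le y\mid\mu(Z)=x\}$ and $G_{\tilde\mu_m,\tilde\pi_m}(x,y)=\Pr_m\{\tilde\pi_m(Z)\le y\mid\tilde\mu_m(Z)=x\}$. $\|g\|_\infty$ is the $P$-essential supremum of $|g|$. Assumption (A): deterministic $a_m\to0$ with $\|\tilde\mu_m-\mu\|_\infty=\mathcal{O}_{\rm P}(a_m)$, $\|\tilde\pi_m-\pi\|_\infty=\mathcal{O}_{\rm P}(a_m)$ for large $m$. $\eta_m=a_m^{-1}(\tilde\mu_m-\mu)$, $\gamma_m=a_m^{-1}(\tilde\pi_m-\pi)$. *)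

theory Defs
  imports "HOL-Probability.Probability"
begin

definition ess_norm :: "'a measure \<Rightarrow> ('a \<Rightarrow> real) \<Rightarrow> ereal" where
  "ess_norm P g = esssup P (\<lambda>z. ereal \<bar>g z\<bar>)"

definition pt_density :: "'a measure \<Rightarrow> ('a \<Rightarrow> real) \<Rightarrow> real \<Rightarrow> real" where
  "pt_density P f x =
     Lim (at_right (0::real))
       (\<lambda>d. measure P {z \<in> space P. \<bar>f z - x\<bar> \<le> d} / (2 * d))"

text \<open>G_{f,g}(x,y) = Pr{ g(Z) \<le> y | f(Z) = x }, Z ~ P, defined as the limit
  of the elementary conditional probabilities given |f(Z) - x| \<le> d, d to 0+.\<close>
definition cond_cdf :: "'a measure \<Rightarrow> ('a \<Rightarrow> real) \<Rightarrow> ('a \<Rightarrow> real) \<Rightarrow> real \<Rightarrow> real \<Rightarrow> real" where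
  "cond_cdf P f g x y =
     Lim (at_right (0::real))
       (\<lambda>d. measure P {z \<in> space P. g z \<le> y \<and> \<bar>f z - x\<bar> \<le> d}
            / measure P {z \<in> space P. \<bar>f z - x\<bar> \<le> d})"

definition int_upto :: "(real \<Rightarrow> real \<Rightarrow> real \<Rightarrow> real \<Rightarrow> real) \<Rightarrow> real \<Rightarrow> real \<Rightarrow> real \<Rightarrow> real \<Rightarrow> real" where
  "int_upto h x u y v = (LINT t:{..y}|lborel. h x u t v)"

end

theory Submission
  imports Defs
begin

(*
  Write mt = mu + c * eta and pt = pi + c * gamma with c = a m.  Substituting
  (mu, eta, pi, gamma) = (x - c u, u, y - c v, v) in the joint density h shows that
  dens_cdf c x y = int int h^Y(x - c u, u, y - c v, v) du dv is the x-density of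
  P(mu + c eta <= x, pi + c gamma <= y), and that its limit dens c x as y -> oo is the density
  of mu + c eta.  Hence G = dens_cdf / dens, and both partial derivatives can be taken under the
  integral.  The dominating functions make dens_cdf, dens and their partial derivatives Lipschitz
  in (c, x, y) with constant 2 K, where K bounds their first moments uniformly in m.  At c = 0
  these quantities only depend on (mu, pi), so letting c = a m -> 0 and (x_m, y_m) -> (x, y)
  gives the claim.
*)

section \<open>Lipschitz and Taylor bounds for real functions\<close>

lemma abs_diff_le_of_deriv_bound:
  fixes g :: "real \<Rightarrow> real"
  assumes "\<And>x. g differentiable (at x)" and "\<And>x. \<bar>deriv g x\<bar> \<le> B"
  shows "\<bar>g x - g x'\<bar> \<le> B * \<bar>x - x'\<bar>"
proof -
  have "norm (g x - g x') \<le> B * norm (x - x')"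
    by (rule field_differentiable_bound[of UNIV g "deriv g"])
       (use assms in \<open>auto simp: DERIV_deriv_iff_real_differentiable\<close>)
  thus ?thesis by simp
qed

lemma taylor_remainder_le_of_lipschitz_deriv:
  fixes g :: "real \<Rightarrow> real"
  assumes d: "\<And>x. g differentiable (at x)"
    and L: "\<And>x x'. \<bar>deriv g x - deriv g x'\<bar> \<le> L * \<bar>x - x'\<bar>"
  shows "\<bar>g (x + e) - g x - e * deriv g x\<bar> \<le> L * e\<^sup>2"
proof -
  define \<phi> where "\<phi> s = g s - s * deriv g x" for s
  have "(\<phi> has_field_derivative (deriv g z - deriv g x)) (at z)" for z
    unfolding \<phi>_def using d[of z]
    by (auto intro!: derivative_eq_intros simp: DERIV_deriv_iff_real_differentiable[symmetric])
  then have D: "(\<phi> has_field_derivative (deriv g z - deriv g x)) (at z within cball x \<bar>e\<bar>)" for z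
    by (rule has_field_derivative_at_within)
  have B: "norm (deriv g z - deriv g x) \<le> L * \<bar>e\<bar>" if "z \<in> cball x \<bar>e\<bar>" for z
  proof -
    have "\<bar>deriv g z - deriv g x\<bar> \<le> L * \<bar>z - x\<bar>" by (rule L)
    moreover have "L \<ge> 0" using L[of 1 0] by simp
    moreover have "\<bar>z - x\<bar> \<le> \<bar>e\<bar>" using that by (simp add: dist_real_def abs_minus_commute)
    ultimately show ?thesis by (simp add: mult_left_mono order_trans)
  qed
  have "norm (\<phi> (x + e) - \<phi> x) \<le> L * \<bar>e\<bar> * norm (x + e - x)"
    by (rule field_differentiable_bound[OF convex_cball D B]) (auto simp: dist_real_def)
  thus ?thesis by (simp add: \<phi>_def algebra_simps power2_eq_square abs_mult)
qed

lemma has_real_derivative_of_taylor_remainder: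
  fixes g :: "real \<Rightarrow> real"
  assumes "\<And>e. \<bar>g (x + e) - g x - e * L\<bar> \<le> C * e\<^sup>2"
  shows "(g has_real_derivative L) (at x)"
proof -
  have "((\<lambda>e. (g (x + e) - g x) / e - L) \<longlongrightarrow> 0) (at 0)"
  proof (rule Lim_null_comparison)
    show "\<forall>\<^sub>F e in at 0. norm ((g (x + e) - g x) / e - L) \<le> C * \<bar>e\<bar>"
      unfolding eventually_at_filter
    proof (intro always_eventually allI impI)
      fix e :: real assume "e \<noteq> 0"
      have "(g (x + e) - g x) / e - L = (g (x + e) - g x - e * L) / e"
        using \<open>e \<noteq> 0\<close> by (simp add: field_simps)
      also have "norm \<dots> \<le> C * e\<^sup>2 / \<bar>e\<bar>"
        using assms[of e] \<open>e \<noteq> 0\<close> by (simp add: divide_right_mono)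
      also have "\<dots> = C * \<bar>e\<bar>"
        using \<open>e \<noteq> 0\<close> by (cases "e > 0") (auto simp: power2_eq_square abs_of_pos abs_of_neg)
      finally show "norm ((g (x + e) - g x) / e - L) \<le> C * \<bar>e\<bar>" .
    qed
    show "((\<lambda>e. C * \<bar>e\<bar>) \<longlongrightarrow> 0) (at 0)"
      by (auto intro!: tendsto_eq_intros)
  qed
  thus ?thesis unfolding DERIV_def by (simp add: LIM_zero_iff)
qed

lemma abs_deriv_le_of_lipschitz_at:
  fixes g :: "real \<Rightarrow> real"
  assumes "g differentiable (at x)" and "\<And>x'. \<bar>g x' - g x\<bar> \<le> L * \<bar>x' - x\<bar>"
  shows "\<bar>deriv g x\<bar> \<le> L"
proof -
  have "((\<lambda>y. (g y - g x) / (y - x)) \<longlongrightarrow> deriv g x) (at x)"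
    using assms(1)
    by (simp add: DERIV_deriv_iff_real_differentiable[symmetric] has_field_derivative_iff)
  hence "((\<lambda>y. \<bar>(g y - g x) / (y - x)\<bar>) \<longlongrightarrow> \<bar>deriv g x\<bar>) (at x)" by (rule tendsto_rabs)
  moreover have "\<forall>\<^sub>F y in at x. \<bar>(g y - g x) / (y - x)\<bar> \<le> L"
    unfolding eventually_at_filter
    by (intro always_eventually allI impI) (use assms(2) in \<open>simp add: abs_divide divide_le_eq\<close>)
  ultimately show ?thesis by (rule tendsto_upperbound) simp
qed

text \<open>A uniform second-order Taylor bound passes to pointwise limits, and it forces the
  derivatives to converge as well: two expansions with step \<open>d\<close> determine \<open>G' n x\<close> up to
  \<open>2 C d\<close> plus \<open>1/d\<close> times the oscillation of \<open>G n\<close>.\<close>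

lemma taylor_remainder_limit:
  fixes G G' :: "nat \<Rightarrow> real \<Rightarrow> real"
  assumes T: "\<And>n x e. \<bar>G n (x + e) - G n x - e * G' n x\<bar> \<le> C * e\<^sup>2"
    and cv: "\<And>x. convergent (\<lambda>n. G n x)" and C: "C \<ge> 0"
  shows "convergent (\<lambda>n. G' n x)"
    and "\<bar>lim (\<lambda>n. G n (x + e)) - lim (\<lambda>n. G n x) - e * lim (\<lambda>n. G' n x)\<bar> \<le> C * e\<^sup>2"
proof -
  have "Cauchy (\<lambda>n. G' n x)"
  proof (rule CauchyI)
    fix \<epsilon> :: real assume \<epsilon>: "\<epsilon> > 0"
    define d where "d = \<epsilon> / (4 * C + 4)"
    have d: "d > 0" using \<epsilon> C by (simp add: d_def)
    have "Cauchy (\<lambda>n. G n (x + d))" "Cauchy (\<lambda>n. G n x)"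
      using cv by (auto simp: Cauchy_convergent_iff)
    moreover have "\<epsilon> * d / 4 > 0" using d \<epsilon> by simp
    ultimately obtain M1 M2
      where M1: "\<forall>m\<ge>M1. \<forall>n\<ge>M1. norm (G m (x + d) - G n (x + d)) < \<epsilon> * d / 4"
        and M2: "\<forall>m\<ge>M2. \<forall>n\<ge>M2. norm (G m x - G n x) < \<epsilon> * d / 4"
      by (metis CauchyD)
    show "\<exists>M. \<forall>m\<ge>M. \<forall>n\<ge>M. norm (G' m x - G' n x) < \<epsilon>"
    proof (intro exI[of _ "max M1 M2"] allI impI)
      fix m n assume "max M1 M2 \<le> m" "max M1 M2 \<le> n"
      hence a: "\<bar>G m (x + d) - G n (x + d)\<bar> < \<epsilon> * d / 4" and b: "\<bar>G m x - G n x\<bar> < \<epsilon> * d / 4"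
        using M1 M2 by auto
      have "d * \<bar>G' m x - G' n x\<bar> = \<bar>d * (G' m x - G' n x)\<bar>" using d by (simp add: abs_mult)
      also have "\<dots> = \<bar>(G m (x + d) - G m x - d * G' m x)
               - (G n (x + d) - G n x - d * G' n x) - (G m (x + d) - G n (x + d)) + (G m x - G n x)\<bar>"
        by (simp add: algebra_simps)
      also have "\<dots> \<le> C * d\<^sup>2 + C * d\<^sup>2 + \<epsilon> * d / 4 + \<epsilon> * d / 4"
        using T[of m x d] T[of n x d] a b by linarith
      also have "\<dots> = d * (2 * C * d + \<epsilon> / 2)" by (simp add: algebra_simps power2_eq_square)
      finally have "\<bar>G' m x - G' n x\<bar> \<le> 2 * C * d + \<epsilon> / 2"
        using d by (simp add: mult_le_cancel_left_pos)
      also have "2 * C * d < \<epsilon> / 2" using \<epsilon> C by (simp add: d_def field_simps)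
      finally show "norm (G' m x - G' n x) < \<epsilon>" by simp
    qed
  qed
  thus conv': "convergent (\<lambda>n. G' n x)" by (simp add: Cauchy_convergent_iff)
  have "(\<lambda>n. \<bar>G n (x + e) - G n x - e * G' n x\<bar>) \<longlonglongrightarrow>
        \<bar>lim (\<lambda>n. G n (x + e)) - lim (\<lambda>n. G n x) - e * lim (\<lambda>n. G' n x)\<bar>"
    using cv[of "x + e"] cv[of x] conv' by (intro tendsto_intros) (auto simp: convergent_LIMSEQ_iff)
  thus "\<bar>lim (\<lambda>n. G n (x + e)) - lim (\<lambda>n. G n x) - e * lim (\<lambda>n. G' n x)\<bar> \<le> C * e\<^sup>2"
    by (rule LIMSEQ_le_const2) (use T in auto)
qed

lemma abs_diff_le_of_ordered_bound:
  fixes \<phi> :: "real \<Rightarrow> real"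
  assumes "\<And>a b. a \<le> b \<Longrightarrow> \<bar>\<phi> b - \<phi> a\<bar> \<le> B * (b - a)"
  shows "\<bar>\<phi> y - \<phi> y'\<bar> \<le> B * \<bar>y - y'\<bar>"
  using assms[of y' y] assms[of y y'] by (cases "y' \<le> y") (auto simp: abs_minus_commute)

lemma LIMSEQ_of_abs_diff_le:
  fixes W e :: "nat \<Rightarrow> real"
  assumes "\<And>m. m \<ge> N \<Longrightarrow> \<bar>W m - V\<bar> \<le> e m" and "e \<longlonglongrightarrow> 0"
  shows "W \<longlonglongrightarrow> V"
proof -
  have "(\<lambda>m. W m - V) \<longlonglongrightarrow> 0"
    by (rule Lim_null_comparison[OF _ assms(2)]) (use assms(1) in \<open>auto simp: eventually_sequentially\<close>)
  thus ?thesis by (simp add: LIM_zero_iff)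
qed

section \<open>Integration lemmas\<close>

lemma abs_integral_diff_le:
  fixes f g w :: "'a \<Rightarrow> real"
  assumes "integrable M f" "integrable M g" "integrable M w" "AE x in M. \<bar>f x - g x\<bar> \<le> w x"
  shows "\<bar>integral\<^sup>L M f - integral\<^sup>L M g\<bar> \<le> integral\<^sup>L M w"
proof -
  have "integral\<^sup>L M f - integral\<^sup>L M g = integral\<^sup>L M (\<lambda>x. f x - g x)"
    using assms by (simp add: integral_diff)
  also have "\<bar>\<dots>\<bar> \<le> integral\<^sup>L M (\<lambda>x. \<bar>f x - g x\<bar>)" by (rule integral_abs_bound)
  also have "\<dots> \<le> integral\<^sup>L M w"
    using assms by (intro integral_mono_AE) auto
  finally show ?thesis .
qed

lemma integrable_integral_le_of_nn_integral_le:
  fixes g :: "'a \<Rightarrow> real"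
  assumes "g \<in> borel_measurable M" "\<And>x. g x \<ge> 0"
    and "(\<integral>\<^sup>+ x. ennreal (g x) \<partial>M) \<le> ennreal K" "K \<ge> 0"
  shows "integrable M g" and "integral\<^sup>L M g \<le> K"
proof -
  have "(\<integral>\<^sup>+ x. ennreal (g x) \<partial>M) < \<infinity>"
    by (rule le_less_trans[OF assms(3)]) simp
  thus i: "integrable M g"
    using assms by (intro integrableI_nonneg) auto
  have "ennreal (integral\<^sup>L M g) \<le> ennreal K"
    using nn_integral_eq_integral[OF i] assms by simp
  thus "integral\<^sup>L M g \<le> K" using assms(4) by simp
qed

lemma integrable_indicator_Ioc: "integrable lborel (indicator {a<..b} :: real \<Rightarrow> real)"
proof (cases "a \<le> b")
  case False
  hence "{a<..b} = {}" by auto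
  thus ?thesis by simp
qed (intro integrable_real_indicator, auto)

lemma abs_integral_Ioc_le:
  fixes f :: "real \<Rightarrow> real"
  assumes "a \<le> b" "integrable lborel (\<lambda>t. indicator {a<..b} t * f t)"
    and "\<And>t. a < t \<Longrightarrow> t \<le> b \<Longrightarrow> \<bar>f t\<bar> \<le> B"
  shows "\<bar>\<integral>t. indicator {a<..b} t * f t \<partial>lborel\<bar> \<le> B * (b - a)"
proof -
  have "integrable lborel (\<lambda>t. indicator {a<..b} t * B)"
    by (intro integrable_mult_left integrable_indicator_Ioc)
  then have "\<bar>\<integral>t. indicator {a<..b} t * f t \<partial>lborel\<bar> \<le> (\<integral>t. indicator {a<..b} t * B \<partial>lborel)"
    by (rule integral_abs_bound_integral[OF assms(2)]) (use assms in \<open>auto simp: indicator_def\<close>)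
  also have "\<dots> = B * (b - a)" using assms(1) by simp
  finally show ?thesis .
qed

lemma tendsto_interval_average:
  fixes g :: "real \<Rightarrow> real"
  assumes c: "continuous_on UNIV g" and L: "\<And>s. \<bar>g s - g x\<bar> \<le> L * \<bar>s - x\<bar>"
  shows "((\<lambda>d. (\<integral>s. indicator {x - d..x + d} s * g s \<partial>lborel) / (2 * d)) \<longlongrightarrow> g x) (at_right 0)"
proof -
  have int: "integrable lborel (\<lambda>s. indicator {x - d..x + d} s * g s)" for d
    using borel_integrable_compact[of "{x - d..x + d}" g] c by (auto intro: continuous_on_subset)
  have Icc: "integrable lborel (indicator {x - d..x + d} :: real \<Rightarrow> real)" for d
    by (intro integrable_real_indicator) (auto simp: emeasure_lborel_Icc_eq)
  have ind: "integrable lborel (\<lambda>s. indicator {x - d..x + d} s * r)" for d r :: real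
    by (rule integrable_mult_left) (rule Icc)
  have L0: "L \<ge> 0" using L[of "x + 1"] by simp
  have key: "\<bar>(\<integral>s. indicator {x - d..x + d} s * g s \<partial>lborel) / (2 * d) - g x\<bar> \<le> L * d"
    if d: "d > 0" for d
  proof -
    have "\<bar>(\<integral>s. indicator {x - d..x + d} s * g s \<partial>lborel) - (\<integral>s. indicator {x - d..x + d} s * g x \<partial>lborel)\<bar>
          \<le> (\<integral>s. indicator {x - d..x + d} s * (L * d) \<partial>lborel)"
    proof (rule abs_integral_diff_le[OF int ind ind], rule AE_I2)
      fix s
      have "\<bar>s - x\<bar> \<le> d \<Longrightarrow> \<bar>g s - g x\<bar> \<le> L * d"
        using L[of s] mult_left_mono[OF _ L0] by (meson order_trans)
      then show "\<bar>indicator {x - d..x + d} s * g s - indicator {x - d..x + d} s * g x\<bar>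
                 \<le> indicator {x - d..x + d} s * (L * d)"
        by (auto simp: indicator_def abs_le_iff)
    qed
    also have "(\<integral>s. indicator {x - d..x + d} s * (L * d) \<partial>lborel) = 2 * d * (L * d)"
      using d by simp
    also have "(\<integral>s. indicator {x - d..x + d} s * g x \<partial>lborel) = 2 * d * g x"
      using d by simp
    finally have "\<bar>(\<integral>s. indicator {x - d..x + d} s * g s \<partial>lborel) - 2 * d * g x\<bar> \<le> 2 * d * (L * d)" .
    moreover have "(\<integral>s. indicator {x - d..x + d} s * g s \<partial>lborel) / (2 * d) - g x
                   = ((\<integral>s. indicator {x - d..x + d} s * g s \<partial>lborel) - 2 * d * g x) / (2 * d)"
      using d by (simp add: field_simps)
    ultimately show ?thesis using d by (simp add: abs_divide divide_le_eq mult_ac)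
  qed
  have "((\<lambda>d. (\<integral>s. indicator {x - d..x + d} s * g s \<partial>lborel) / (2 * d) - g x) \<longlongrightarrow> 0) (at_right 0)"
  proof (rule Lim_null_comparison)
    show "\<forall>\<^sub>F d in at_right 0. norm ((\<integral>s. indicator {x - d..x + d} s * g s \<partial>lborel) / (2 * d) - g x) \<le> L * d"
      using eventually_at_right_less[of 0] by eventually_elim (use key in auto)
    show "((\<lambda>d. L * d) \<longlongrightarrow> 0) (at_right 0)"
      by (rule tendsto_eq_intros tendsto_ident_at | simp)+
  qed
  thus ?thesis by (simp add: LIM_zero_iff)
qed

lemma nn_integral_lborel4_reorder:
  fixes G :: "real \<times> real \<times> real \<times> real \<Rightarrow> ennreal"
  assumes [measurable]: "G \<in> borel_measurable (lborel \<Otimes>\<^sub>M (lborel \<Otimes>\<^sub>M (lborel \<Otimes>\<^sub>M lborel)))"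
  shows "(\<integral>\<^sup>+ q. G q \<partial>lborel) =
         (\<integral>\<^sup>+ p. (\<integral>\<^sup>+ x. (\<integral>\<^sup>+ y. G (x, fst p, y, snd p) \<partial>lborel) \<partial>lborel) \<partial>lborel)"
proof -
  have sf2: "sigma_finite_measure (lborel \<Otimes>\<^sub>M (lborel :: real measure))"
    by (intro sigma_finite_pair_measure sigma_finite_lborel)
  have sf3: "sigma_finite_measure (lborel \<Otimes>\<^sub>M (lborel \<Otimes>\<^sub>M (lborel :: real measure)))"
    by (intro sigma_finite_pair_measure sigma_finite_lborel sf2)
  have "(\<integral>\<^sup>+ q. G q \<partial>lborel) = (\<integral>\<^sup>+ q. G q \<partial>(lborel \<Otimes>\<^sub>M (lborel \<Otimes>\<^sub>M (lborel \<Otimes>\<^sub>M lborel))))"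
    by (simp only: lborel_prod)
  also have "\<dots> = (\<integral>\<^sup>+ x. (\<integral>\<^sup>+ r. G (x, r) \<partial>(lborel \<Otimes>\<^sub>M (lborel \<Otimes>\<^sub>M lborel))) \<partial>lborel)"
    by (rule sigma_finite_measure.nn_integral_fst[OF sf3, symmetric]) measurable
  also have "\<dots> = (\<integral>\<^sup>+ x. (\<integral>\<^sup>+ u. (\<integral>\<^sup>+ s. G (x, u, s) \<partial>(lborel \<Otimes>\<^sub>M lborel)) \<partial>lborel) \<partial>lborel)"
    by (intro nn_integral_cong sigma_finite_measure.nn_integral_fst[OF sf2, symmetric]) measurable
  also have "\<dots> = (\<integral>\<^sup>+ x. (\<integral>\<^sup>+ u. (\<integral>\<^sup>+ y. (\<integral>\<^sup>+ v. G (x, u, y, v) \<partial>lborel) \<partial>lborel) \<partial>lborel) \<partial>lborel)"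
    by (intro nn_integral_cong lborel.nn_integral_fst[symmetric]) measurable
  also have "\<dots> = (\<integral>\<^sup>+ u. (\<integral>\<^sup>+ x. (\<integral>\<^sup>+ y. (\<integral>\<^sup>+ v. G (x, u, y, v) \<partial>lborel) \<partial>lborel) \<partial>lborel) \<partial>lborel)"
    by (rule lborel_pair.Fubini'[symmetric]) measurable
  also have "\<dots> = (\<integral>\<^sup>+ u. (\<integral>\<^sup>+ x. (\<integral>\<^sup>+ v. (\<integral>\<^sup>+ y. G (x, u, y, v) \<partial>lborel) \<partial>lborel) \<partial>lborel) \<partial>lborel)"
    by (rule nn_integral_cong, rule nn_integral_cong, rule lborel_pair.Fubini') measurable
  also have "\<dots> = (\<integral>\<^sup>+ u. (\<integral>\<^sup>+ v. (\<integral>\<^sup>+ x. (\<integral>\<^sup>+ y. G (x, u, y, v) \<partial>lborel) \<partial>lborel) \<partial>lborel) \<partial>lborel)"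
    by (rule nn_integral_cong, rule lborel_pair.Fubini') measurable
  also have "\<dots> = (\<integral>\<^sup>+ p. (\<integral>\<^sup>+ x. (\<integral>\<^sup>+ y. G (x, fst p, y, snd p) \<partial>lborel) \<partial>lborel) \<partial>(lborel \<Otimes>\<^sub>M lborel))"
  proof -
    have "(\<lambda>(u, v). \<integral>\<^sup>+ x. \<integral>\<^sup>+ y. G (x, u, y, v) \<partial>lborel \<partial>lborel) \<in> borel_measurable (lborel \<Otimes>\<^sub>M lborel)"
      by measurable
    from lborel.nn_integral_fst[OF this] show ?thesis by (simp add: case_prod_beta')
  qed
  also have "\<dots> = (\<integral>\<^sup>+ p. (\<integral>\<^sup>+ x. (\<integral>\<^sup>+ y. G (x, fst p, y, snd p) \<partial>lborel) \<partial>lborel) \<partial>lborel)"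
    by (simp only: lborel_prod)
  finally show ?thesis .
qed

lemma sets_lborel_real4:
  "sets (lborel :: (real \<times> real \<times> real \<times> real) measure) = sets (borel \<Otimes>\<^sub>M (borel \<Otimes>\<^sub>M (borel \<Otimes>\<^sub>M borel)))"
  by (simp only: borel_prod sets_lborel)

lemma sets_lborel_pair_real4:
  "sets (lborel \<Otimes>\<^sub>M (lborel \<Otimes>\<^sub>M (lborel \<Otimes>\<^sub>M (lborel :: real measure))))
     = sets (borel \<Otimes>\<^sub>M (borel \<Otimes>\<^sub>M (borel \<Otimes>\<^sub>M (borel :: real measure))))"
  by (intro sets_pair_measure_cong) simp_all

lemma sets_lborel_pair_real2_real:
  "sets ((lborel :: (real \<times> real) measure) \<Otimes>\<^sub>M (lborel :: real measure))
     = sets ((borel \<Otimes>\<^sub>M borel) \<Otimes>\<^sub>M (borel :: real measure))"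
  by (intro sets_pair_measure_cong) (simp only: borel_prod sets_lborel)+

lemma measurable_fst_real2[measurable]: "(fst :: real \<times> real \<Rightarrow> real) \<in> borel_measurable borel"
  by (rule borel_measurable_continuous_onI) (intro continuous_intros)

lemma measurable_snd_real2[measurable]: "(snd :: real \<times> real \<Rightarrow> real) \<in> borel_measurable borel"
  by (rule borel_measurable_continuous_onI) (intro continuous_intros)

definition moment_weight :: "real \<times> real \<Rightarrow> real" where
  "moment_weight p = 1 + \<bar>fst p\<bar> + \<bar>snd p\<bar>"

lemma moment_weight_ge_1: "moment_weight p \<ge> 1"
  by (simp add: moment_weight_def)

lemma borel_measurable_moment_weight[measurable]: "moment_weight \<in> borel_measurable borel"
  unfolding moment_weight_def by (intro borel_measurable_continuous_onI continuous_intros)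

lemma abs_affine_shift_le:
  fixes x x' c c' u :: real
  shows "\<bar>x - c * u - (x' - c' * u)\<bar> \<le> (\<bar>x - x'\<bar> + \<bar>c - c'\<bar>) * (1 + \<bar>u\<bar>)"
proof -
  have "\<bar>x - c * u - (x' - c' * u)\<bar> = \<bar>(x - x') - (c - c') * u\<bar>" by (simp add: algebra_simps)
  also have "\<dots> \<le> \<bar>x - x'\<bar> + \<bar>c - c'\<bar> * \<bar>u\<bar>" by (simp add: abs_mult abs_triangle_ineq4[THEN order_trans])
  also have "\<dots> \<le> (\<bar>x - x'\<bar> + \<bar>c - c'\<bar>) * (1 + \<bar>u\<bar>)" by (simp add: algebra_simps)
  finally show ?thesis .
qed

lemma abs_integral_diff_le_of_shift_lipschitz:
  fixes g1 g2 :: "real \<times> real \<Rightarrow> real" and A B :: "real \<Rightarrow> real \<Rightarrow> real"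
  assumes g: "integrable lborel g1" "integrable lborel g2"
    and A: "integrable lborel (\<lambda>p. moment_weight p * A (fst p) (snd p))"
      "(\<integral>p. moment_weight p * A (fst p) (snd p) \<partial>lborel) \<le> K" "\<And>u v. A u v \<ge> 0"
    and B: "integrable lborel (\<lambda>p. moment_weight p * B (fst p) (snd p))"
      "(\<integral>p. moment_weight p * B (fst p) (snd p) \<partial>lborel) \<le> K" "\<And>u v. B u v \<ge> 0"
    and le: "AE p in lborel. \<bar>g1 p - g2 p\<bar> \<le> A (fst p) (snd p) * \<bar>x - c * fst p - (x' - c' * fst p)\<bar>
                                   + B (fst p) (snd p) * \<bar>y - c * snd p - (y' - c' * snd p)\<bar>"
  shows "\<bar>integral\<^sup>L lborel g1 - integral\<^sup>L lborel g2\<bar> \<le> (\<bar>x - x'\<bar> + \<bar>y - y'\<bar> + \<bar>c - c'\<bar>) * (2 * K)"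
proof -
  define D where "D = \<bar>x - x'\<bar> + \<bar>y - y'\<bar> + \<bar>c - c'\<bar>"
  let ?wA = "\<lambda>p. moment_weight p * A (fst p) (snd p)" and ?wB = "\<lambda>p. moment_weight p * B (fst p) (snd p)"
  have "\<bar>x - c * u - (x' - c' * u)\<bar> \<le> D * moment_weight (u, v)"
       "\<bar>y - c * v - (y' - c' * v)\<bar> \<le> D * moment_weight (u, v)" for u v
    using abs_affine_shift_le[of x c u x' c'] abs_affine_shift_le[of y c v y' c']
    by (auto simp: D_def moment_weight_def elim!: order_trans intro!: mult_mono)
  then have pw: "A u v * \<bar>x - c * u - (x' - c' * u)\<bar> + B u v * \<bar>y - c * v - (y' - c' * v)\<bar>
      \<le> D * (moment_weight (u, v) * A u v + moment_weight (u, v) * B u v)" for u v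
    using mult_left_mono[OF _ A(3)] mult_left_mono[OF _ B(3)]
    by (simp add: algebra_simps) (metis add_mono mult.commute mult.left_commute)
  have "AE p in lborel. \<bar>g1 p - g2 p\<bar> \<le> D * (?wA p + ?wB p)"
    using le
  proof eventually_elim
    case (elim p)
    with pw[of "fst p" "snd p"] show ?case by (simp only: prod.collapse)
  qed
  then have "\<bar>integral\<^sup>L lborel g1 - integral\<^sup>L lborel g2\<bar> \<le> (\<integral>p. D * (?wA p + ?wB p) \<partial>lborel)"
    using A(1) B(1) by (intro abs_integral_diff_le[OF g]) auto
  also have "\<dots> = D * (integral\<^sup>L lborel ?wA + integral\<^sup>L lborel ?wB)"
    using A(1) B(1) by simp
  also have "\<dots> \<le> D * (2 * K)"
    using A(2) B(2) by (intro mult_left_mono) (auto simp: D_def)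
  finally show ?thesis unfolding D_def .
qed

lemma abs_integral_taylor_le:
  fixes g1 g2 g3 B :: "real \<times> real \<Rightarrow> real"
  assumes i: "integrable lborel g1" "integrable lborel g2" "integrable lborel g3" "integrable lborel B"
    and b: "AE p in lborel. \<bar>g1 p - g2 p - e * g3 p\<bar> \<le> B p * e\<^sup>2" and BK: "integral\<^sup>L lborel B \<le> K"
  shows "\<bar>integral\<^sup>L lborel g1 - integral\<^sup>L lborel g2 - e * integral\<^sup>L lborel g3\<bar> \<le> K * e\<^sup>2"
proof -
  have "integral\<^sup>L lborel g1 - integral\<^sup>L lborel g2 - e * integral\<^sup>L lborel g3
      = (\<integral>p. g1 p - g2 p - e * g3 p \<partial>lborel)"
    using i by simp
  also have "\<bar>\<dots>\<bar> \<le> (\<integral>p. \<bar>g1 p - g2 p - e * g3 p\<bar> \<partial>lborel)" by (rule integral_abs_bound)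
  also have "\<dots> \<le> (\<integral>p. B p * e\<^sup>2 \<partial>lborel)"
    using i b by (intro integral_mono_AE) auto
  also have "\<dots> = integral\<^sup>L lborel B * e\<^sup>2" by simp
  also have "\<dots> \<le> K * e\<^sup>2" using BK by (intro mult_right_mono) auto
  finally show ?thesis .
qed

definition joint_dens_cdf :: "'a measure \<Rightarrow> ('a \<Rightarrow> real) \<Rightarrow> ('a \<Rightarrow> real) \<Rightarrow> real \<Rightarrow> real \<Rightarrow> real" where
  "joint_dens_cdf P f g x y =
     Lim (at_right (0::real)) (\<lambda>d. measure P {z \<in> space P. g z \<le> y \<and> \<bar>f z - x\<bar> \<le> d} / (2 * d))"

section \<open>The joint density of the perturbed pair\<close>

text \<open>One fitted pair: \<open>\<eta>\<close> and \<open>\<gamma>\<close> stand for the rescaled errors \<open>\<eta>\<^sub>m\<close> and \<open>\<gamma>\<^sub>m\<close>, and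
  \<open>hb i\<close>, \<open>hbY i\<close> for the dominating functions of \<open>h\<^sub>m\<close> and \<open>h\<^sup>Y\<^sub>m\<close>.\<close>

locale smooth_joint_density =
  fixes P :: "'a measure" and \<mu> \<eta> \<pi> \<gamma> :: "'a \<Rightarrow> real"
    and h :: "real \<Rightarrow> real \<Rightarrow> real \<Rightarrow> real \<Rightarrow> real"
    and hb hbY :: "nat \<Rightarrow> real \<Rightarrow> real \<Rightarrow> real" and K :: real
  assumes prob_space_P: "prob_space P"
    and distr: "distributed P lborel (\<lambda>z. (\<mu> z, \<eta> z, \<pi> z, \<gamma> z)) (\<lambda>(x, u, y, v). ennreal (h x u y v))"
    and h_nonneg: "\<And>x u y v. h x u y v \<ge> 0"
    and h_differentiable_x: "\<And>x u y v. (\<lambda>x'. h x' u y v) differentiable (at x)"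
    and h_differentiable_y: "\<And>x u y v. (\<lambda>y'. h x u y' v) differentiable (at y)"
    and hY_differentiable_x: "\<And>x u y v. (\<lambda>x'. int_upto h x' u y v) differentiable (at x)"
    and hY_dx_differentiable_x:
      "\<And>x u y v. (\<lambda>x'. deriv (\<lambda>x''. int_upto h x'' u y v) x') differentiable (at x)"
    and bounds_nonneg: "\<And>i u v. i \<le> 2 \<Longrightarrow> hb i u v \<ge> 0 \<and> hbY i u v \<ge> 0"
    and bounds_measurable: "\<And>i. i \<le> 2 \<Longrightarrow> (\<lambda>(u, v). hb i u v) \<in> borel_measurable lborel
                                   \<and> (\<lambda>(u, v). hbY i u v) \<in> borel_measurable lborel"
    and bounds: "\<And>x u y v. h x u y v \<le> hb 0 u v
             \<and> \<bar>deriv (\<lambda>x'. h x' u y v) x\<bar> \<le> hb 1 u v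
             \<and> \<bar>deriv (\<lambda>y'. h x u y' v) y\<bar> \<le> hb 2 u v
             \<and> int_upto h x u y v \<le> hbY 0 u v
             \<and> \<bar>deriv (\<lambda>x'. int_upto h x' u y v) x\<bar> \<le> hbY 1 u v
             \<and> \<bar>deriv (\<lambda>x'. deriv (\<lambda>x''. int_upto h x'' u y v) x') x\<bar> \<le> hbY 2 u v"
    and K_nonneg: "K \<ge> 0"
    and moments: "\<And>i. i \<le> 2 \<Longrightarrow>
         (\<integral>\<^sup>+ (u, v). ennreal ((1 + \<bar>u\<bar> + \<bar>v\<bar>) * hb i u v) \<partial>(lborel :: (real \<times> real) measure)) \<le> ennreal K
       \<and> (\<integral>\<^sup>+ (u, v). ennreal ((1 + \<bar>u\<bar> + \<bar>v\<bar>) * hbY i u v) \<partial>(lborel :: (real \<times> real) measure)) \<le> ennreal K"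
begin

abbreviation hY :: "real \<Rightarrow> real \<Rightarrow> real \<Rightarrow> real \<Rightarrow> real" where
  "hY \<equiv> int_upto h"

definition hY_dx :: "real \<Rightarrow> real \<Rightarrow> real \<Rightarrow> real \<Rightarrow> real" where
  "hY_dx x u y v = deriv (\<lambda>x'. hY x' u y v) x"

definition fiber_integrable :: "real \<Rightarrow> real \<Rightarrow> bool" where
  "fiber_integrable u v \<longleftrightarrow> (\<forall>x. integrable lborel (\<lambda>t. h x u t v))"

lemma measurable_components[measurable]:
  "\<mu> \<in> borel_measurable P" "\<eta> \<in> borel_measurable P" "\<pi> \<in> borel_measurable P" "\<gamma> \<in> borel_measurable P"
proof -
  have "(\<lambda>z. (\<mu> z, \<eta> z, \<pi> z, \<gamma> z)) \<in> P \<rightarrow>\<^sub>M borel \<Otimes>\<^sub>M (borel \<Otimes>\<^sub>M (borel \<Otimes>\<^sub>M borel))"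
    using distributed_measurable[OF distr] measurable_cong_sets[OF refl sets_lborel_real4] by blast
  then show "\<mu> \<in> borel_measurable P" "\<eta> \<in> borel_measurable P" "\<pi> \<in> borel_measurable P" "\<gamma> \<in> borel_measurable P"
    by (auto simp: measurable_pair_iff o_def)
qed

lemma h_borel: "(\<lambda>(x, u, y, v). h x u y v) \<in> borel_measurable borel"
proof -
  have "(\<lambda>p. ennreal ((\<lambda>(x, u, y, v). h x u y v) p)) \<in> borel_measurable lborel"
    using distributed_borel_measurable[OF distr] by (simp add: case_prod_beta')
  hence "(\<lambda>(x, u, y, v). h x u y v) \<in> borel_measurable lborel"
    by (subst (asm) borel_measurable_ennreal_iff) (auto simp: h_nonneg split: prod.splits)
  thus ?thesis by simp
qed

lemma measurable_h[measurable (raw)]: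
  assumes [measurable]: "f1 \<in> borel_measurable M" "f2 \<in> borel_measurable M"
    "f3 \<in> borel_measurable M" "f4 \<in> borel_measurable M"
  shows "(\<lambda>p. h (f1 p) (f2 p) (f3 p) (f4 p)) \<in> borel_measurable M"
proof -
  have "(\<lambda>p. (f1 p, f2 p, f3 p, f4 p)) \<in> M \<rightarrow>\<^sub>M (borel \<Otimes>\<^sub>M (borel \<Otimes>\<^sub>M (borel \<Otimes>\<^sub>M borel)))"
    by measurable
  hence "(\<lambda>p. (f1 p, f2 p, f3 p, f4 p)) \<in> M \<rightarrow>\<^sub>M (borel :: (real \<times> real \<times> real \<times> real) measure)"
    by (simp only: borel_prod)
  from measurable_compose[OF this h_borel] show ?thesis by simp
qed

lemma measurable_bounds[measurable (raw)]:
  assumes i: "i \<le> 2" and [measurable]: "f1 \<in> borel_measurable M" "f2 \<in> borel_measurable M"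
  shows "(\<lambda>p. hb i (f1 p) (f2 p)) \<in> borel_measurable M"
    and "(\<lambda>p. hbY i (f1 p) (f2 p)) \<in> borel_measurable M"
proof -
  have "(\<lambda>p. (f1 p, f2 p)) \<in> M \<rightarrow>\<^sub>M (borel \<Otimes>\<^sub>M borel)"
    by measurable
  hence m: "(\<lambda>p. (f1 p, f2 p)) \<in> M \<rightarrow>\<^sub>M (borel :: (real \<times> real) measure)"
    by (simp only: borel_prod)
  have "(\<lambda>(u, v). hb i u v) \<in> borel_measurable borel" "(\<lambda>(u, v). hbY i u v) \<in> borel_measurable borel"
    using bounds_measurable[OF i] by auto
  from measurable_compose[OF m this(1)] measurable_compose[OF m this(2)]
  show "(\<lambda>p. hb i (f1 p) (f2 p)) \<in> borel_measurable M" "(\<lambda>p. hbY i (f1 p) (f2 p)) \<in> borel_measurable M"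
    by simp_all
qed

lemma weighted_bounds:
  assumes i: "i \<le> 2"
  shows "integrable lborel (\<lambda>p. moment_weight p * hb i (fst p) (snd p))"
    and "(\<integral>p. moment_weight p * hb i (fst p) (snd p) \<partial>lborel) \<le> K"
    and "integrable lborel (\<lambda>p. moment_weight p * hbY i (fst p) (snd p))"
    and "(\<integral>p. moment_weight p * hbY i (fst p) (snd p) \<partial>lborel) \<le> K"
proof -
  have eq: "(\<lambda>(u, v). ennreal ((1 + \<bar>u\<bar> + \<bar>v\<bar>) * f u v)) = (\<lambda>p. ennreal (moment_weight p * f (fst p) (snd p)))"
    for f :: "real \<Rightarrow> real \<Rightarrow> real"
    by (auto simp: moment_weight_def fun_eq_iff)
  note mom = moments[OF i, unfolded eq]
  have nn: "moment_weight p * hb i (fst p) (snd p) \<ge> 0" "moment_weight p * hbY i (fst p) (snd p) \<ge> 0" for p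
    using bounds_nonneg[OF i] moment_weight_ge_1[of p] by auto
  have "(\<lambda>p. moment_weight p * hb i (fst p) (snd p)) \<in> borel_measurable borel"
       "(\<lambda>p. moment_weight p * hbY i (fst p) (snd p)) \<in> borel_measurable borel"
    using i by measurable
  then have "(\<lambda>p. moment_weight p * hb i (fst p) (snd p)) \<in> borel_measurable lborel"
       "(\<lambda>p. moment_weight p * hbY i (fst p) (snd p)) \<in> borel_measurable lborel"
    by simp_all
  from integrable_integral_le_of_nn_integral_le[OF this(1) nn(1) conjunct1[OF mom] K_nonneg]
       integrable_integral_le_of_nn_integral_le[OF this(2) nn(2) conjunct2[OF mom] K_nonneg]
  show "integrable lborel (\<lambda>p. moment_weight p * hb i (fst p) (snd p))"
    "(\<integral>p. moment_weight p * hb i (fst p) (snd p) \<partial>lborel) \<le> K"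
    "integrable lborel (\<lambda>p. moment_weight p * hbY i (fst p) (snd p))"
    "(\<integral>p. moment_weight p * hbY i (fst p) (snd p) \<partial>lborel) \<le> K"
    by blast+
qed

lemma le_moment_weight_mult: "0 \<le> (y::real) \<Longrightarrow> y \<le> moment_weight p * y"
  using mult_right_mono[OF moment_weight_ge_1[of p], of y] by simp

lemma bounds_integrable:
  assumes i: "i \<le> 2"
  shows "integrable lborel (\<lambda>p. hb i (fst p) (snd p))"
    and "integrable lborel (\<lambda>p. hbY i (fst p) (snd p))"
proof -
  have le: "r \<le> \<bar>moment_weight p * r\<bar>" if "r \<ge> 0" for r p
    using le_moment_weight_mult[OF that, of p] by linarith
  show "integrable lborel (\<lambda>p. hb i (fst p) (snd p))"
    by (rule Bochner_Integration.integrable_bound[OF weighted_bounds(1)[OF i]])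
       (use i bounds_nonneg[OF i] in \<open>auto intro!: AE_I2 le\<close>)
  show "integrable lborel (\<lambda>p. hbY i (fst p) (snd p))"
    by (rule Bochner_Integration.integrable_bound[OF weighted_bounds(3)[OF i]])
       (use i bounds_nonneg[OF i] in \<open>auto intro!: AE_I2 le\<close>)
qed

lemma bounds_integral_le:
  assumes i: "i \<le> 2"
  shows "(\<integral>p. hb i (fst p) (snd p) \<partial>lborel) \<le> K"
    and "(\<integral>p. hbY i (fst p) (snd p) \<partial>lborel) \<le> K"
proof -
  have "(\<integral>p. hb i (fst p) (snd p) \<partial>lborel) \<le> (\<integral>p. moment_weight p * hb i (fst p) (snd p) \<partial>lborel)"
    by (intro integral_mono bounds_integrable weighted_bounds i le_moment_weight_mult)
       (use bounds_nonneg[OF i] in auto)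
  thus "(\<integral>p. hb i (fst p) (snd p) \<partial>lborel) \<le> K" using weighted_bounds(2)[OF i] by linarith
  have "(\<integral>p. hbY i (fst p) (snd p) \<partial>lborel) \<le> (\<integral>p. moment_weight p * hbY i (fst p) (snd p) \<partial>lborel)"
    by (intro integral_mono bounds_integrable weighted_bounds i le_moment_weight_mult)
       (use bounds_nonneg[OF i] in auto)
  thus "(\<integral>p. hbY i (fst p) (snd p) \<partial>lborel) \<le> K" using weighted_bounds(4)[OF i] by linarith
qed

lemma hY_eq_integral: "hY x u y v = (\<integral>t. indicator {..y} t * h x u t v \<partial>lborel)"
  by (simp add: int_upto_def set_lebesgue_integral_def)

lemma hY_nonneg: "hY x u y v \<ge> 0"
  unfolding hY_eq_integral using h_nonneg
  by (intro Bochner_Integration.integral_nonneg) (simp add: indicator_def)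

lemma h_le: "h x u y v \<le> hb 0 u v"
  using bounds by blast

lemma hY_le: "hY x u y v \<le> hbY 0 u v"
  using bounds by blast

lemma abs_hY_dx_le: "\<bar>hY_dx x u y v\<bar> \<le> hbY 1 u v"
  using bounds unfolding hY_dx_def by blast

lemma h_lipschitz: "\<bar>h x u y v - h x' u y' v\<bar> \<le> hb 1 u v * \<bar>x - x'\<bar> + hb 2 u v * \<bar>y - y'\<bar>"
proof -
  have "\<bar>h x u y v - h x' u y v\<bar> \<le> hb 1 u v * \<bar>x - x'\<bar>"
    by (rule abs_diff_le_of_deriv_bound[where g="\<lambda>x. h x u y v"])
       (use h_differentiable_x bounds in auto)
  moreover have "\<bar>h x' u y v - h x' u y' v\<bar> \<le> hb 2 u v * \<bar>y - y'\<bar>"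
    by (rule abs_diff_le_of_deriv_bound[where g="\<lambda>y. h x' u y v"])
       (use h_differentiable_y bounds in auto)
  ultimately show ?thesis by linarith
qed

lemma hY_lipschitz_x: "\<bar>hY x u y v - hY x' u y v\<bar> \<le> hbY 1 u v * \<bar>x - x'\<bar>"
  by (rule abs_diff_le_of_deriv_bound[where g="\<lambda>x. hY x u y v"]) (use hY_differentiable_x bounds in auto)

lemma hY_dx_lipschitz_x: "\<bar>hY_dx x u y v - hY_dx x' u y v\<bar> \<le> hbY 2 u v * \<bar>x - x'\<bar>"
  unfolding hY_dx_def
  by (rule abs_diff_le_of_deriv_bound[where g="\<lambda>x. deriv (\<lambda>x'. hY x' u y v) x"])
     (use hY_dx_differentiable_x bounds in auto)

lemma hY_taylor_x: "\<bar>hY (x + e) u y v - hY x u y v - e * hY_dx x u y v\<bar> \<le> hbY 2 u v * e\<^sup>2"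
  unfolding hY_dx_def
  by (rule taylor_remainder_le_of_lipschitz_deriv[where g="\<lambda>x. hY x u y v"])
     (use hY_differentiable_x hY_dx_lipschitz_x in \<open>auto simp: hY_dx_def\<close>)

lemma fiber_integrable_indicator:
  assumes "fiber_integrable u v" "A \<in> sets borel"
  shows "integrable lborel (\<lambda>t. indicator A t * h x u t v)"
  using integrable_mult_indicator[of A lborel "\<lambda>t. h x u t v"] assms by (simp add: fiber_integrable_def)

lemma hY_diff_eq_integral:
  assumes g: "fiber_integrable u v" and "y' \<le> y"
  shows "hY x u y v - hY x u y' v = (\<integral>t. indicator {y'<..y} t * h x u t v \<partial>lborel)"
proof -
  have "hY x u y v - hY x u y' v =
        (\<integral>t. indicator {..y} t * h x u t v - indicator {..y'} t * h x u t v \<partial>lborel)"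
    unfolding hY_eq_integral
    by (rule Bochner_Integration.integral_diff[symmetric]) (auto intro!: fiber_integrable_indicator g)
  also have "\<dots> = (\<integral>t. indicator {y'<..y} t * h x u t v \<partial>lborel)"
    using \<open>y' \<le> y\<close> by (intro Bochner_Integration.integral_cong) (auto simp: indicator_def)
  finally show ?thesis .
qed

lemma hY_mono:
  assumes "fiber_integrable u v" and "y' \<le> y"
  shows "hY x u y' v \<le> hY x u y v"
proof -
  have "0 \<le> (\<integral>t. indicator {y'<..y} t * h x u t v \<partial>lborel)"
    using h_nonneg by (intro Bochner_Integration.integral_nonneg) (simp add: indicator_def)
  thus ?thesis using hY_diff_eq_integral[OF assms, of x] by linarith
qed

lemma hY_lipschitz_y:
  assumes g: "fiber_integrable u v"
  shows "\<bar>hY x u y v - hY x u y' v\<bar> \<le> hb 0 u v * \<bar>y - y'\<bar>"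
proof (rule abs_diff_le_of_ordered_bound)
  fix a b :: real assume "a \<le> b"
  then show "\<bar>hY x u b v - hY x u a v\<bar> \<le> hb 0 u v * (b - a)"
    unfolding hY_diff_eq_integral[OF g \<open>a \<le> b\<close>]
    by (rule abs_integral_Ioc_le) (use h_le h_nonneg in \<open>auto intro!: fiber_integrable_indicator g\<close>)
qed

lemma hY_taylor_y:
  assumes g: "fiber_integrable u v"
  shows "\<bar>hY x u (y + e) v - hY x u y v - e * h x u y v\<bar> \<le> hb 2 u v * e\<^sup>2"
proof -
  have *: "\<bar>hY x u b v - hY x u a v - (b - a) * h x u z v\<bar> \<le> hb 2 u v * (b - a) * (b - a)"
    if ab: "a \<le> b" "a \<le> z" "z \<le> b" for a b z
  proof -
    have int: "integrable lborel (\<lambda>t. indicator {a<..b} t * (h x u t v - h x u z v))"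
      by (auto simp: right_diff_distrib integrable_indicator_Ioc
          intro!: fiber_integrable_indicator g integrable_real_mult_indicator)
    have "(\<integral>t. indicator {a<..b} t * (h x u t v - h x u z v) \<partial>lborel) =
          (\<integral>t. indicator {a<..b} t * h x u t v \<partial>lborel) - (\<integral>t. indicator {a<..b} t * h x u z v \<partial>lborel)"
      by (subst Bochner_Integration.integral_diff[symmetric])
         (auto simp: right_diff_distrib integrable_indicator_Ioc
           intro!: fiber_integrable_indicator g integrable_real_mult_indicator)
    also have "\<dots> = hY x u b v - hY x u a v - (b - a) * h x u z v"
      using ab integrable_indicator_Ioc hY_diff_eq_integral[OF g ab(1)] by simp
    finally have "\<bar>hY x u b v - hY x u a v - (b - a) * h x u z v\<bar>
        = \<bar>\<integral>t. indicator {a<..b} t * (h x u t v - h x u z v) \<partial>lborel\<bar>" by simp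
    also have "\<dots> \<le> (hb 2 u v * (b - a)) * (b - a)"
    proof (rule abs_integral_Ioc_le[OF ab(1) int])
      fix t assume "a < t" "t \<le> b"
      then have "hb 2 u v * \<bar>t - z\<bar> \<le> hb 2 u v * (b - a)"
        using ab bounds_nonneg[of 2 u v] by (auto intro!: mult_left_mono)
      then show "\<bar>h x u t v - h x u z v\<bar> \<le> hb 2 u v * (b - a)"
        using h_lipschitz[of x u t v x z] by simp
    qed
    finally show ?thesis by simp
  qed
  show ?thesis
  proof (cases "e \<ge> 0")
    case True
    thus ?thesis using *[of y "y + e" y] by (simp add: power2_eq_square mult.assoc)
  next
    case False
    then have "\<bar>hY x u y v - hY x u (y + e) v - (y - (y + e)) * h x u y v\<bar>
        \<le> hb 2 u v * (y - (y + e)) * (y - (y + e))"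
      by (intro *) auto
    thus ?thesis by (simp add: power2_eq_square abs_minus_commute algebra_simps)
  qed
qed

lemma has_real_derivative_hY_x: "((\<lambda>s. hY s u y v) has_real_derivative hY_dx x u y v) (at x)"
  using hY_differentiable_x unfolding hY_dx_def by (simp add: DERIV_deriv_iff_real_differentiable)

lemma hY_dx_lipschitz_y:
  assumes g: "fiber_integrable u v"
  shows "\<bar>hY_dx x u y v - hY_dx x u y' v\<bar> \<le> hb 1 u v * \<bar>y - y'\<bar>"
proof (rule abs_diff_le_of_ordered_bound)
  fix a b :: real assume ab: "a \<le> b"
  define \<phi> where "\<phi> s = hY s u b v - hY s u a v" for s
  have D: "(\<phi> has_real_derivative (hY_dx x u b v - hY_dx x u a v)) (at x)"
    unfolding \<phi>_def by (intro DERIV_diff has_real_derivative_hY_x)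
  have "\<bar>deriv \<phi> x\<bar> \<le> hb 1 u v * (b - a)"
  proof (rule abs_deriv_le_of_lipschitz_at)
    show "\<phi> differentiable (at x)" using D real_differentiable_def by blast
    fix x'
    have "\<phi> x' - \<phi> x = (\<integral>t. indicator {a<..b} t * (h x' u t v - h x u t v) \<partial>lborel)"
      unfolding \<phi>_def hY_diff_eq_integral[OF g ab]
      by (subst Bochner_Integration.integral_diff[symmetric])
         (auto simp: right_diff_distrib intro!: fiber_integrable_indicator g)
    also have "\<bar>\<dots>\<bar> \<le> (hb 1 u v * \<bar>x' - x\<bar>) * (b - a)"
    proof (rule abs_integral_Ioc_le[OF ab])
      show "integrable lborel (\<lambda>t. indicator {a<..b} t * (h x' u t v - h x u t v))"
        by (auto simp: right_diff_distrib
            intro!: fiber_integrable_indicator g Bochner_Integration.integrable_diff)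
      show "\<bar>h x' u t v - h x u t v\<bar> \<le> hb 1 u v * \<bar>x' - x\<bar>" for t
        using h_lipschitz[of x' u t v x t] by simp
    qed
    finally show "\<bar>\<phi> x' - \<phi> x\<bar> \<le> hb 1 u v * (b - a) * \<bar>x' - x\<bar>" by (simp add: mult_ac)
  qed
  then show "\<bar>hY_dx x u b v - hY_dx x u a v\<bar> \<le> hb 1 u v * (b - a)"
    using DERIV_imp_deriv[OF D] by simp
qed

lemma hY_lipschitz:
  assumes "fiber_integrable u v"
  shows "\<bar>hY x u y v - hY x' u y' v\<bar> \<le> hbY 1 u v * \<bar>x - x'\<bar> + hb 0 u v * \<bar>y - y'\<bar>"
  using hY_lipschitz_x[of x u y v x'] hY_lipschitz_y[OF assms, of x' y y'] by linarith

lemma hY_dx_lipschitz: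
  assumes "fiber_integrable u v"
  shows "\<bar>hY_dx x u y v - hY_dx x' u y' v\<bar> \<le> hbY 2 u v * \<bar>x - x'\<bar> + hb 1 u v * \<bar>y - y'\<bar>"
  using hY_dx_lipschitz_x[of x u y v x'] hY_dx_lipschitz_y[OF assms, of x' y y'] by linarith

lemma isCont_h_x: "isCont (\<lambda>x. h x u y v) x"
  using h_differentiable_x differentiable_imp_continuous_within by blast

lemma measurable_fiber[measurable]: "(\<lambda>t. h x u t v) \<in> borel_measurable lborel"
  by simp

lemma nn_integral_h_eq_1:
  "(\<integral>\<^sup>+ q. ennreal (h (fst q) (fst (snd q)) (fst (snd (snd q))) (snd (snd (snd q)))) \<partial>lborel) = 1"
proof -
  interpret prob_space P by (rule prob_space_P)
  have "emeasure P ((\<lambda>z. (\<mu> z, \<eta> z, \<pi> z, \<gamma> z)) -` UNIV \<inter> space P)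
      = (\<integral>\<^sup>+ q. (\<lambda>(x, u, y, v). ennreal (h x u y v)) q * indicator UNIV q \<partial>lborel)"
    by (rule distributed_emeasure[OF distr]) simp
  then show ?thesis by (simp add: case_prod_beta' emeasure_space_1)
qed

lemma nn_integral_fiber_le:
  assumes "integrable lborel (\<lambda>t. h x u t v)"
  shows "(\<integral>\<^sup>+ t. ennreal (h x u t v) \<partial>lborel) \<le> ennreal (hbY 0 u v)"
proof -
  have "(\<lambda>k. \<integral>\<^sup>+ t. ennreal (indicator {..real k} t * h x u t v) \<partial>lborel)
          \<longlonglongrightarrow> (\<integral>\<^sup>+ t. ennreal (h x u t v) \<partial>lborel)"
  proof (rule nn_integral_LIMSEQ)
    show "incseq (\<lambda>k t. ennreal (indicator {..real k} t * h x u t v))"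
      by (auto simp: incseq_def le_fun_def indicator_def h_nonneg intro!: ennreal_leI)
    fix t
    obtain N :: nat where "t \<le> real N" using real_arch_simple by blast
    then have "\<forall>k\<ge>N. ennreal (indicator {..real k} t * h x u t v) = ennreal (h x u t v)"
      by (auto simp: indicator_def)
    then have "\<forall>\<^sub>F k in sequentially. ennreal (indicator {..real k} t * h x u t v) = ennreal (h x u t v)"
      by (auto simp: eventually_sequentially)
    then show "(\<lambda>k. ennreal (indicator {..real k} t * h x u t v)) \<longlonglongrightarrow> ennreal (h x u t v)"
      by (rule tendsto_eventually)
  qed measurable
  moreover have "(\<integral>\<^sup>+ t. ennreal (indicator {..real k} t * h x u t v) \<partial>lborel) = ennreal (hY x u (real k) v)" for k
    unfolding hY_eq_integral
    by (rule nn_integral_eq_integral)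
       (use assms in \<open>auto intro!: integrable_mult_indicator[where 'b=real, simplified] simp: h_nonneg\<close>)
  moreover have "ennreal (hY x u (real k) v) \<le> ennreal (hbY 0 u v)" for k
    using hY_le by (rule ennreal_leI)
  ultimately show ?thesis
    by (intro LIMSEQ_le_const2) auto
qed

text \<open>Finiteness of \<open>\<integral> h(x,u,t,v) dt\<close> for almost every \<open>x\<close> extends to every \<open>x\<close>: approximate
  \<open>x\<close> by good points and apply Fatou's lemma, using continuity of \<open>h\<close> in \<open>x\<close> and the bound
  \<open>h\<^sup>Y \<le> hbY 0\<close>.\<close>

lemma fiber_integrable_if_AE_finite:
  assumes ae: "AE x in lborel. (\<integral>\<^sup>+ t. ennreal (h x u t v) \<partial>lborel) \<noteq> \<infinity>"
  shows "fiber_integrable u v"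
  unfolding fiber_integrable_def
proof
  fix x0
  let ?N = "\<lambda>x. (\<integral>\<^sup>+ t. ennreal (h x u t v) \<partial>lborel)"
  from ae obtain Z where Z: "{x \<in> space lborel. \<not> ?N x \<noteq> \<infinity>} \<subseteq> Z" "emeasure lborel Z = 0" "Z \<in> sets lborel"
    by (rule AE_E)
  have "\<exists>x. \<bar>x - x0\<bar> < 1 / Suc n \<and> ?N x \<noteq> \<infinity>" for n
  proof (rule ccontr)
    assume "\<not> ?thesis"
    hence "{x0 - 1 / Suc n <..< x0 + 1 / Suc n} \<subseteq> Z" using Z(1) by (auto simp: abs_less_iff)
    hence "emeasure lborel {x0 - 1 / Suc n <..< x0 + 1 / Suc n} \<le> 0"
      using Z(2,3) emeasure_mono by metis
    then show False by simp
  qed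
  then obtain xs where xs: "\<And>n. \<bar>xs n - x0\<bar> < 1 / Suc n" "\<And>n. ?N (xs n) \<noteq> \<infinity>" by metis
  have "(\<lambda>n. xs n - x0) \<longlonglongrightarrow> 0"
    by (rule Lim_null_comparison[OF _ LIMSEQ_Suc[OF lim_inverse_n']])
       (use xs(1) in \<open>auto intro!: always_eventually less_imp_le\<close>)
  then have xs_lim: "xs \<longlonglongrightarrow> x0" by (simp add: LIM_zero_iff)
  have "?N (xs n) \<le> ennreal (hbY 0 u v)" for n
    using xs(2)[of n] by (intro nn_integral_fiber_le integrableI_nonneg) (auto simp: h_nonneg less_top)
  have "(\<integral>\<^sup>+ t. liminf (\<lambda>n. ennreal (h (xs n) u t v)) \<partial>lborel) \<le> liminf (\<lambda>n. ?N (xs n))"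
    by (rule nn_integral_liminf) measurable
  also have "\<dots> \<le> ennreal (hbY 0 u v)"
    by (rule Liminf_le) (use \<open>\<And>n. ?N (xs n) \<le> ennreal (hbY 0 u v)\<close> in auto)
  also have "(\<lambda>t. liminf (\<lambda>n. ennreal (h (xs n) u t v))) = (\<lambda>t. ennreal (h x0 u t v))"
    by (intro ext lim_imp_Liminf tendsto_ennrealI isCont_tendsto_compose[OF isCont_h_x xs_lim]) simp
  finally show "integrable lborel (\<lambda>t. h x0 u t v)"
    by (intro integrableI_nonneg) (auto simp: h_nonneg le_less_trans)
qed

lemma AE_fiber_integrable: "AE p in lborel. fiber_integrable (fst p) (snd p)"
proof -
  let ?\<Phi> = "\<lambda>p. (\<integral>\<^sup>+ x. (\<integral>\<^sup>+ y. ennreal (h x (fst p) y (snd p)) \<partial>lborel) \<partial>lborel)"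
  have "(\<lambda>q. ennreal (h (fst q) (fst (snd q)) (fst (snd (snd q))) (snd (snd (snd q)))))
                 \<in> borel_measurable (lborel \<Otimes>\<^sub>M (lborel \<Otimes>\<^sub>M (lborel \<Otimes>\<^sub>M lborel)))"
    by measurable
  from nn_integral_lborel4_reorder[OF this] have "(\<integral>\<^sup>+ p. ?\<Phi> p \<partial>lborel) = 1"
    using nn_integral_h_eq_1 by simp
  moreover have "?\<Phi> \<in> borel_measurable (lborel \<Otimes>\<^sub>M lborel)" by measurable
  then have "?\<Phi> \<in> borel_measurable lborel" by (simp only: lborel_prod)
  ultimately have "AE p in lborel. ?\<Phi> p \<noteq> \<infinity>"
    by (intro nn_integral_PInf_AE) auto
  moreover have "?\<Phi> p \<noteq> \<infinity> \<Longrightarrow> fiber_integrable (fst p) (snd p)" for p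
    by (rule fiber_integrable_if_AE_finite, rule nn_integral_PInf_AE) (auto simp: top.not_eq_extremum)
  ultimately show ?thesis by (auto elim: AE_mp)
qed

lemma hY_borel:
  "(\<lambda>q. hY (fst q) (fst (snd q)) (fst (snd (snd q))) (snd (snd (snd q))))
     \<in> borel_measurable (borel \<Otimes>\<^sub>M (borel \<Otimes>\<^sub>M (borel \<Otimes>\<^sub>M (borel :: real measure))))"
proof -
  let ?N = "borel \<Otimes>\<^sub>M (borel \<Otimes>\<^sub>M (borel \<Otimes>\<^sub>M (borel :: real measure)))"
  let ?S = "{z. snd z \<le> fst (snd (snd (fst z)))}"
  have ms: "(\<lambda>z. snd z) \<in> borel_measurable (?N \<Otimes>\<^sub>M lborel)"
    using measurable_snd[of ?N "lborel :: real measure"] by simp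
  have mf: "(\<lambda>z. fst (snd (snd (fst z)))) \<in> borel_measurable (?N \<Otimes>\<^sub>M (lborel :: real measure))"
    by measurable
  have S: "?S \<in> sets (?N \<Otimes>\<^sub>M (lborel :: real measure))"
    using borel_measurable_le[OF ms mf] by (simp add: space_pair_measure)
  have eq: "hY x u y v = (\<integral>t. indicator ?S ((x, u, y, v), t) * h x u t v \<partial>lborel)" for x u y v
    unfolding hY_eq_integral by (intro Bochner_Integration.integral_cong) (auto simp: indicator_def)
  have "(\<lambda>z. indicator ?S z * h (fst (fst z)) (fst (snd (fst z))) (snd z) (snd (snd (snd (fst z)))))
      \<in> borel_measurable (?N \<Otimes>\<^sub>M lborel)"
    using S by measurable
  hence "(\<lambda>q. \<integral>t. indicator ?S (q, t) * h (fst q) (fst (snd q)) t (snd (snd (snd q))) \<partial>lborel)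
      \<in> borel_measurable ?N"
    by (intro lborel.borel_measurable_lebesgue_integral) (simp add: case_prod_beta')
  thus ?thesis unfolding eq by simp
qed

lemma measurable_hY[measurable (raw)]:
  assumes [measurable]: "f1 \<in> borel_measurable M" "f2 \<in> borel_measurable M"
    "f3 \<in> borel_measurable M" "f4 \<in> borel_measurable M"
  shows "(\<lambda>p. hY (f1 p) (f2 p) (f3 p) (f4 p)) \<in> borel_measurable M"
proof -
  have "(\<lambda>p. (f1 p, f2 p, f3 p, f4 p)) \<in> M \<rightarrow>\<^sub>M (borel \<Otimes>\<^sub>M (borel \<Otimes>\<^sub>M (borel \<Otimes>\<^sub>M borel)))"
    by measurable
  from measurable_compose[OF this hY_borel] show ?thesis by simp
qed

lemma measurable_hY_dx[measurable (raw)]: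
  assumes [measurable]: "f1 \<in> borel_measurable M" "f2 \<in> borel_measurable M"
    "f3 \<in> borel_measurable M" "f4 \<in> borel_measurable M"
  shows "(\<lambda>p. hY_dx (f1 p) (f2 p) (f3 p) (f4 p)) \<in> borel_measurable M"
proof (rule borel_measurable_LIMSEQ_real)
  let ?u = "\<lambda>n p. (hY (f1 p + 1 / Suc n) (f2 p) (f3 p) (f4 p) - hY (f1 p) (f2 p) (f3 p) (f4 p)) / (1 / Suc n)"
  show "?u n \<in> borel_measurable M" for n by measurable
  fix p
  let ?g = "\<lambda>x. hY x (f2 p) (f3 p) (f4 p)"
  have "((\<lambda>e. (?g (f1 p + e) - ?g (f1 p)) / e) \<longlongrightarrow> hY_dx (f1 p) (f2 p) (f3 p) (f4 p)) (at 0)"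
    using has_real_derivative_hY_x unfolding DERIV_def .
  moreover have "filterlim (\<lambda>n. 1 / real (Suc n)) (at 0) sequentially"
    unfolding filterlim_at using LIMSEQ_Suc[OF lim_inverse_n'] by auto
  ultimately show "(\<lambda>n. ?u n p) \<longlonglongrightarrow> hY_dx (f1 p) (f2 p) (f3 p) (f4 p)"
    using filterlim_compose by fastforce
qed

definition dens_cdf :: "real \<Rightarrow> real \<Rightarrow> real \<Rightarrow> real" where
  "dens_cdf c x y = (\<integral>p. hY (x - c * fst p) (fst p) (y - c * snd p) (snd p) \<partial>lborel)"

definition dens_cdf_dx :: "real \<Rightarrow> real \<Rightarrow> real \<Rightarrow> real" where
  "dens_cdf_dx c x y = (\<integral>p. hY_dx (x - c * fst p) (fst p) (y - c * snd p) (snd p) \<partial>lborel)"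

definition dens_cdf_dy :: "real \<Rightarrow> real \<Rightarrow> real \<Rightarrow> real" where
  "dens_cdf_dy c x y = (\<integral>p. h (x - c * fst p) (fst p) (y - c * snd p) (snd p) \<partial>lborel)"

definition dens :: "real \<Rightarrow> real \<Rightarrow> real" where
  "dens c x = lim (\<lambda>n. dens_cdf c x (real n))"

definition dens_dx :: "real \<Rightarrow> real \<Rightarrow> real" where
  "dens_dx c x = lim (\<lambda>n. dens_cdf_dx c x (real n))"

lemma integrable_hY_shift:
  "integrable lborel (\<lambda>p. hY (x - c * fst p) (fst p) (y - c * snd p) (snd p))"
  by (rule Bochner_Integration.integrable_bound[OF bounds_integrable(2)[of 0]])
     (auto intro!: AE_I2 simp: hY_nonneg hY_le bounds_nonneg)

lemma integrable_hY_dx_shift: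
  "integrable lborel (\<lambda>p. hY_dx (x - c * fst p) (fst p) (y - c * snd p) (snd p))"
proof (rule Bochner_Integration.integrable_bound[OF bounds_integrable(2)[of 1]])
  show "AE p in lborel. norm (hY_dx (x - c * fst p) (fst p) (y - c * snd p) (snd p))
                        \<le> norm (hbY 1 (fst p) (snd p))"
    using abs_hY_dx_le bounds_nonneg[of 1] by (intro AE_I2) (simp add: abs_of_nonneg)
qed auto

lemma integrable_h_shift:
  "integrable lborel (\<lambda>p. h (x - c * fst p) (fst p) (y - c * snd p) (snd p))"
  by (rule Bochner_Integration.integrable_bound[OF bounds_integrable(1)[of 0]])
     (auto intro!: AE_I2 simp: h_nonneg h_le bounds_nonneg)

lemma dens_cdf_lipschitz:
  "\<bar>dens_cdf c x y - dens_cdf c' x' y'\<bar> \<le> (\<bar>x - x'\<bar> + \<bar>y - y'\<bar> + \<bar>c - c'\<bar>) * (2 * K)"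
proof -
  have "AE p in lborel.
      \<bar>hY (x - c * fst p) (fst p) (y - c * snd p) (snd p) - hY (x' - c' * fst p) (fst p) (y' - c' * snd p) (snd p)\<bar>
      \<le> hbY 1 (fst p) (snd p) * \<bar>x - c * fst p - (x' - c' * fst p)\<bar>
        + hb 0 (fst p) (snd p) * \<bar>y - c * snd p - (y' - c' * snd p)\<bar>"
    using AE_fiber_integrable by eventually_elim (rule hY_lipschitz)
  then show ?thesis
    unfolding dens_cdf_def
    by (intro abs_integral_diff_le_of_shift_lipschitz[OF integrable_hY_shift integrable_hY_shift
          weighted_bounds(3,4)[of 1] _ weighted_bounds(1,2)[of 0]])
       (simp_all add: bounds_nonneg)
qed

lemma dens_cdf_dx_lipschitz:
  "\<bar>dens_cdf_dx c x y - dens_cdf_dx c' x' y'\<bar> \<le> (\<bar>x - x'\<bar> + \<bar>y - y'\<bar> + \<bar>c - c'\<bar>) * (2 * K)"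
proof -
  have "AE p in lborel.
      \<bar>hY_dx (x - c * fst p) (fst p) (y - c * snd p) (snd p) - hY_dx (x' - c' * fst p) (fst p) (y' - c' * snd p) (snd p)\<bar>
      \<le> hbY 2 (fst p) (snd p) * \<bar>x - c * fst p - (x' - c' * fst p)\<bar>
        + hb 1 (fst p) (snd p) * \<bar>y - c * snd p - (y' - c' * snd p)\<bar>"
    using AE_fiber_integrable by eventually_elim (rule hY_dx_lipschitz)
  then show ?thesis
    unfolding dens_cdf_dx_def
    by (intro abs_integral_diff_le_of_shift_lipschitz[OF integrable_hY_dx_shift integrable_hY_dx_shift
          weighted_bounds(3,4)[of 2] _ weighted_bounds(1,2)[of 1]])
       (simp_all add: bounds_nonneg)
qed

lemma dens_cdf_dy_lipschitz:
  "\<bar>dens_cdf_dy c x y - dens_cdf_dy c' x' y'\<bar> \<le> (\<bar>x - x'\<bar> + \<bar>y - y'\<bar> + \<bar>c - c'\<bar>) * (2 * K)"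
proof -
  have "AE p in lborel.
      \<bar>h (x - c * fst p) (fst p) (y - c * snd p) (snd p) - h (x' - c' * fst p) (fst p) (y' - c' * snd p) (snd p)\<bar>
      \<le> hb 1 (fst p) (snd p) * \<bar>x - c * fst p - (x' - c' * fst p)\<bar>
        + hb 2 (fst p) (snd p) * \<bar>y - c * snd p - (y' - c' * snd p)\<bar>"
    by (intro AE_I2 h_lipschitz)
  then show ?thesis
    unfolding dens_cdf_dy_def
    by (intro abs_integral_diff_le_of_shift_lipschitz[OF integrable_h_shift integrable_h_shift
          weighted_bounds(1,2)[of 1] _ weighted_bounds(1,2)[of 2]])
       (simp_all add: bounds_nonneg)
qed

lemma dens_cdf_taylor_x: "\<bar>dens_cdf c (x + e) y - dens_cdf c x y - e * dens_cdf_dx c x y\<bar> \<le> K * e\<^sup>2"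
  unfolding dens_cdf_def dens_cdf_dx_def
proof (rule abs_integral_taylor_le[OF integrable_hY_shift integrable_hY_shift integrable_hY_dx_shift
      bounds_integrable(2)[of 2] _ bounds_integral_le(2)[of 2]])
  have "x + e - c * fst p = (x - c * fst p) + e" for p :: "real \<times> real" by simp
  then show "AE p in lborel. \<bar>hY (x + e - c * fst p) (fst p) (y - c * snd p) (snd p) -
          hY (x - c * fst p) (fst p) (y - c * snd p) (snd p) -
          e * hY_dx (x - c * fst p) (fst p) (y - c * snd p) (snd p)\<bar> \<le> hbY 2 (fst p) (snd p) * e\<^sup>2"
    by (simp only:) (intro AE_I2 hY_taylor_x)
qed simp_all

lemma dens_cdf_taylor_y: "\<bar>dens_cdf c x (y + e) - dens_cdf c x y - e * dens_cdf_dy c x y\<bar> \<le> K * e\<^sup>2"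
  unfolding dens_cdf_def dens_cdf_dy_def
proof (rule abs_integral_taylor_le[OF integrable_hY_shift integrable_hY_shift integrable_h_shift
      bounds_integrable(1)[of 2] _ bounds_integral_le(1)[of 2]])
  show "AE p in lborel. \<bar>hY (x - c * fst p) (fst p) (y + e - c * snd p) (snd p) -
          hY (x - c * fst p) (fst p) (y - c * snd p) (snd p) -
          e * h (x - c * fst p) (fst p) (y - c * snd p) (snd p)\<bar> \<le> hb 2 (fst p) (snd p) * e\<^sup>2"
    using AE_fiber_integrable
  proof eventually_elim
    case (elim p)
    have "y + e - c * snd p = (y - c * snd p) + e" by simp
    then show ?case by (simp only:) (rule hY_taylor_y[OF elim])
  qed
qed simp_all

lemma has_real_derivative_dens_cdf_x: "((\<lambda>x. dens_cdf c x y) has_real_derivative dens_cdf_dx c x y) (at x)"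
  by (rule has_real_derivative_of_taylor_remainder[of _ x _ K])
     (use dens_cdf_taylor_x in \<open>simp add: mult.commute\<close>)

lemma has_real_derivative_dens_cdf_y: "((\<lambda>y. dens_cdf c x y) has_real_derivative dens_cdf_dy c x y) (at y)"
  by (rule has_real_derivative_of_taylor_remainder[of _ y _ K])
     (use dens_cdf_taylor_y in \<open>simp add: mult.commute\<close>)

lemma dens_cdf_nonneg: "dens_cdf c x y \<ge> 0"
  unfolding dens_cdf_def by (intro Bochner_Integration.integral_nonneg hY_nonneg)

lemma dens_cdf_mono: "y \<le> y' \<Longrightarrow> dens_cdf c x y \<le> dens_cdf c x y'"
  unfolding dens_cdf_def
  by (intro integral_mono_AE integrable_hY_shift, rule AE_mp[OF AE_fiber_integrable], intro AE_I2 impI hY_mono) auto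

lemma dens_cdf_le: "dens_cdf c x y \<le> K"
proof -
  have "dens_cdf c x y \<le> (\<integral>p. hbY 0 (fst p) (snd p) \<partial>lborel)"
    unfolding dens_cdf_def by (intro integral_mono integrable_hY_shift bounds_integrable) (auto simp: hY_le)
  thus ?thesis using bounds_integral_le(2)[of 0] by simp
qed

lemma dens_cdf_tendsto: "(\<lambda>n. dens_cdf c x (real n)) \<longlonglongrightarrow> dens c x"
proof -
  have "convergent (\<lambda>n. dens_cdf c x (real n))"
  proof (rule Bseq_monoseq_convergent)
    show "Bseq (\<lambda>n. dens_cdf c x (real n))"
      using dens_cdf_le dens_cdf_nonneg by (intro BseqI'[of _ K]) auto
    show "monoseq (\<lambda>n. dens_cdf c x (real n))"
      by (rule mono_SucI1) (auto intro!: dens_cdf_mono)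
  qed
  then show ?thesis unfolding dens_def by (simp add: convergent_LIMSEQ_iff)
qed

lemma dens_cdf_dx_tendsto: "(\<lambda>n. dens_cdf_dx c x (real n)) \<longlonglongrightarrow> dens_dx c x"
  and dens_taylor: "\<bar>dens c (x + e) - dens c x - e * dens_dx c x\<bar> \<le> K * e\<^sup>2"
proof -
  have taylor: "\<bar>dens_cdf c (x + e) (real n) - dens_cdf c x (real n) - e * dens_cdf_dx c x (real n)\<bar> \<le> K * e\<^sup>2"
    for n x e by (rule dens_cdf_taylor_x)
  have "convergent (\<lambda>n. dens_cdf c x (real n))" for x
    using dens_cdf_tendsto convergent_def by blast
  note lim = taylor_remainder_limit[where G="\<lambda>n x. dens_cdf c x (real n)", OF taylor this K_nonneg]
  show "(\<lambda>n. dens_cdf_dx c x (real n)) \<longlonglongrightarrow> dens_dx c x"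
    using lim(1) unfolding dens_dx_def by (simp add: convergent_LIMSEQ_iff)
  show "\<bar>dens c (x + e) - dens c x - e * dens_dx c x\<bar> \<le> K * e\<^sup>2"
    using lim(2) unfolding dens_def dens_dx_def .
qed

lemma has_real_derivative_dens: "(dens c has_real_derivative dens_dx c x) (at x)"
  by (rule has_real_derivative_of_taylor_remainder[of _ x _ K]) (use dens_taylor in \<open>simp add: mult.commute\<close>)

lemma dens_lipschitz: "\<bar>dens c x - dens c' x'\<bar> \<le> (\<bar>x - x'\<bar> + \<bar>c - c'\<bar>) * (2 * K)"
proof (rule LIMSEQ_le_const2)
  show "(\<lambda>n. \<bar>dens_cdf c x (real n) - dens_cdf c' x' (real n)\<bar>) \<longlonglongrightarrow> \<bar>dens c x - dens c' x'\<bar>"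
    by (intro tendsto_intros dens_cdf_tendsto)
  have "\<bar>dens_cdf c x (real n) - dens_cdf c' x' (real n)\<bar> \<le> (\<bar>x - x'\<bar> + \<bar>c - c'\<bar>) * (2 * K)" for n
    using dens_cdf_lipschitz[of c x "real n" c' x' "real n"] by simp
  then show "\<exists>N. \<forall>n\<ge>N. \<bar>dens_cdf c x (real n) - dens_cdf c' x' (real n)\<bar> \<le> (\<bar>x - x'\<bar> + \<bar>c - c'\<bar>) * (2 * K)"
    by blast
qed

lemma dens_dx_lipschitz: "\<bar>dens_dx c x - dens_dx c' x'\<bar> \<le> (\<bar>x - x'\<bar> + \<bar>c - c'\<bar>) * (2 * K)"
proof (rule LIMSEQ_le_const2)
  show "(\<lambda>n. \<bar>dens_cdf_dx c x (real n) - dens_cdf_dx c' x' (real n)\<bar>) \<longlonglongrightarrow> \<bar>dens_dx c x - dens_dx c' x'\<bar>"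
    by (intro tendsto_intros dens_cdf_dx_tendsto)
  have "\<bar>dens_cdf_dx c x (real n) - dens_cdf_dx c' x' (real n)\<bar> \<le> (\<bar>x - x'\<bar> + \<bar>c - c'\<bar>) * (2 * K)" for n
    using dens_cdf_dx_lipschitz[of c x "real n" c' x' "real n"] by simp
  then show "\<exists>N. \<forall>n\<ge>N. \<bar>dens_cdf_dx c x (real n) - dens_cdf_dx c' x' (real n)\<bar> \<le> (\<bar>x - x'\<bar> + \<bar>c - c'\<bar>) * (2 * K)"
    by blast
qed

lemma dens_nonneg: "dens c x \<ge> 0"
  using dens_cdf_nonneg by (intro LIMSEQ_le_const[OF dens_cdf_tendsto]) auto

lemma emeasure_preimage_eq_iterated:
  assumes S: "S \<in> sets (borel \<Otimes>\<^sub>M (borel \<Otimes>\<^sub>M (borel \<Otimes>\<^sub>M (borel :: real measure))))"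
  shows "emeasure P ((\<lambda>z. (\<mu> z, \<eta> z, \<pi> z, \<gamma> z)) -` S \<inter> space P)
     = (\<integral>\<^sup>+ p. (\<integral>\<^sup>+ x. (\<integral>\<^sup>+ y. ennreal (h x (fst p) y (snd p)) * indicator S (x, fst p, y, snd p)
          \<partial>lborel) \<partial>lborel) \<partial>lborel)"
proof -
  have "S \<in> sets lborel" using S sets_lborel_real4 by simp
  from distributed_emeasure[OF distr this]
  have "emeasure P ((\<lambda>z. (\<mu> z, \<eta> z, \<pi> z, \<gamma> z)) -` S \<inter> space P)
      = (\<integral>\<^sup>+ q. ennreal (h (fst q) (fst (snd q)) (fst (snd (snd q))) (snd (snd (snd q)))) * indicator S q \<partial>lborel)"
    by (simp add: case_prod_beta')
  also have "\<dots> = (\<integral>\<^sup>+ p. (\<integral>\<^sup>+ x. (\<integral>\<^sup>+ y. ennreal (h x (fst p) y (snd p)) * indicator S (x, fst p, y, snd p)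
          \<partial>lborel) \<partial>lborel) \<partial>lborel)"
  proof (rule trans[OF nn_integral_lborel4_reorder], simp_all)
    have "(\<lambda>q. ennreal (h (fst q) (fst (snd q)) (fst (snd (snd q))) (snd (snd (snd q)))) * indicator S q)
        \<in> borel_measurable (borel \<Otimes>\<^sub>M (borel \<Otimes>\<^sub>M (borel \<Otimes>\<^sub>M (borel :: real measure))))"
      using S by measurable
    then show "(\<lambda>q. ennreal (h (fst q) (fst (snd q)) (fst (snd (snd q))) (snd (snd (snd q)))) * indicator S q)
        \<in> borel_measurable (lborel \<Otimes>\<^sub>M (lborel \<Otimes>\<^sub>M (lborel \<Otimes>\<^sub>M lborel)))"
      by (subst measurable_cong_sets[OF sets_lborel_pair_real4 refl])
  qed
  finally show ?thesis .
qed

lemma nn_integral_fiber_indicator_atMost: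
  assumes "fiber_integrable u v"
  shows "(\<integral>\<^sup>+ y0. ennreal (h x0 u y0 v) * indicator {..b} y0 \<partial>lborel) = ennreal (hY x0 u b v)"
proof -
  have "(\<integral>\<^sup>+ y0. ennreal (h x0 u y0 v) * indicator {..b} y0 \<partial>lborel)
      = (\<integral>\<^sup>+ y0. ennreal (indicator {..b} y0 * h x0 u y0 v) \<partial>lborel)"
    by (intro nn_integral_cong) (auto simp: indicator_def)
  also have "\<dots> = ennreal (hY x0 u b v)"
    unfolding hY_eq_integral
    by (rule nn_integral_eq_integral) (auto intro!: fiber_integrable_indicator assms simp: h_nonneg)
  finally show ?thesis .
qed

text \<open>The change of variables \<open>s = x\<^sub>0 + c u\<close> in the inner \<open>x\<^sub>0\<close>-integral.\<close>

lemma nn_integral_fiber_window: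
  assumes "fiber_integrable u v"
  shows "(\<integral>\<^sup>+ x0. (\<integral>\<^sup>+ y0. ennreal (h x0 u y0 v) *
            indicator {q. fst (snd (snd q)) + c * snd (snd (snd q)) \<le> y \<and> \<bar>fst q + c * fst (snd q) - x\<bar> \<le> d}
              (x0, u, y0, v) \<partial>lborel) \<partial>lborel)
       = (\<integral>\<^sup>+ s. ennreal (indicator {x - d..x + d} s * hY (s - c * u) u (y - c * v) v) \<partial>lborel)"
proof -
  have [measurable]: "{x0. \<bar>x0 + c * u - x\<bar> \<le> d} \<in> sets borel" by measurable
  have "(\<integral>\<^sup>+ x0. (\<integral>\<^sup>+ y0. ennreal (h x0 u y0 v) *
            indicator {q. fst (snd (snd q)) + c * snd (snd (snd q)) \<le> y \<and> \<bar>fst q + c * fst (snd q) - x\<bar> \<le> d}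
              (x0, u, y0, v) \<partial>lborel) \<partial>lborel)
      = (\<integral>\<^sup>+ x0. indicator {x0. \<bar>x0 + c * u - x\<bar> \<le> d} x0 *
            (\<integral>\<^sup>+ y0. ennreal (h x0 u y0 v) * indicator {..y - c * v} y0 \<partial>lborel) \<partial>lborel)"
    by (intro nn_integral_cong) (auto simp: indicator_def le_diff_eq)
  also have "\<dots> = (\<integral>\<^sup>+ x0. indicator {x0. \<bar>x0 + c * u - x\<bar> \<le> d} x0 * ennreal (hY x0 u (y - c * v) v) \<partial>lborel)"
    by (simp add: nn_integral_fiber_indicator_atMost[OF assms])
  also have "\<dots> = (\<integral>\<^sup>+ s. indicator {x0. \<bar>x0 + c * u - x\<bar> \<le> d} (- (c * u) + 1 * s)
                     * ennreal (hY (- (c * u) + 1 * s) u (y - c * v) v) \<partial>lborel)"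
    by (subst nn_integral_real_affine[where c=1 and t="- (c * u)"]) (simp_all, measurable)
  also have "\<dots> = (\<integral>\<^sup>+ s. ennreal (indicator {x - d..x + d} s * hY (s - c * u) u (y - c * v) v) \<partial>lborel)"
    by (intro nn_integral_cong) (auto simp: indicator_def abs_le_iff algebra_simps)
  finally show ?thesis .
qed

lemma continuous_on_dens_cdf_x: "continuous_on UNIV (\<lambda>s. dens_cdf c s y)"
  using has_real_derivative_dens_cdf_x by (intro continuous_at_imp_continuous_on ballI DERIV_isCont) auto

lemma continuous_on_dens: "continuous_on UNIV (dens c)"
  using has_real_derivative_dens by (intro continuous_at_imp_continuous_on ballI DERIV_isCont) auto

lemma nn_integral_hY_shift:
  assumes "r \<ge> 0"
  shows "(\<integral>\<^sup>+ p. ennreal (r * hY (s - c * fst p) (fst p) (y - c * snd p) (snd p)) \<partial>lborel)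
    = ennreal (r * dens_cdf c s y)"
proof -
  have "(\<integral>\<^sup>+ p. ennreal (r * hY (s - c * fst p) (fst p) (y - c * snd p) (snd p)) \<partial>lborel)
      = ennreal (\<integral>p. r * hY (s - c * fst p) (fst p) (y - c * snd p) (snd p) \<partial>lborel)"
    using assms by (intro nn_integral_eq_integral) (auto intro!: integrable_hY_shift simp: hY_nonneg)
  then show ?thesis unfolding dens_cdf_def by simp
qed

lemma emeasure_joint_window:
  "emeasure P {z \<in> space P. \<pi> z + c * \<gamma> z \<le> y \<and> \<bar>\<mu> z + c * \<eta> z - x\<bar> \<le> d}
     = (\<integral>\<^sup>+ s. ennreal (indicator {x - d..x + d} s * dens_cdf c s y) \<partial>lborel)"
proof -
  define S where "S = {q :: real \<times> real \<times> real \<times> real.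
    fst (snd (snd q)) + c * snd (snd (snd q)) \<le> y \<and> \<bar>fst q + c * fst (snd q) - x\<bar> \<le> d}"
  have "Measurable.pred (borel \<Otimes>\<^sub>M (borel \<Otimes>\<^sub>M (borel \<Otimes>\<^sub>M (borel :: real measure))))
          (\<lambda>q. fst (snd (snd q)) + c * snd (snd (snd q)) \<le> y \<and> \<bar>fst q + c * fst (snd q) - x\<bar> \<le> d)"
    by measurable
  then have S: "S \<in> sets (borel \<Otimes>\<^sub>M (borel \<Otimes>\<^sub>M (borel \<Otimes>\<^sub>M (borel :: real measure))))"
    unfolding S_def pred_def by (simp add: space_pair_measure)
  have "{z \<in> space P. \<pi> z + c * \<gamma> z \<le> y \<and> \<bar>\<mu> z + c * \<eta> z - x\<bar> \<le> d}
      = (\<lambda>z. (\<mu> z, \<eta> z, \<pi> z, \<gamma> z)) -` S \<inter> space P"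
    by (auto simp: S_def)
  then have "emeasure P {z \<in> space P. \<pi> z + c * \<gamma> z \<le> y \<and> \<bar>\<mu> z + c * \<eta> z - x\<bar> \<le> d}
      = (\<integral>\<^sup>+ p. (\<integral>\<^sup>+ x0. (\<integral>\<^sup>+ y0. ennreal (h x0 (fst p) y0 (snd p)) * indicator S (x0, fst p, y0, snd p)
          \<partial>lborel) \<partial>lborel) \<partial>lborel)"
    using emeasure_preimage_eq_iterated[OF S] by simp
  also have "\<dots> = (\<integral>\<^sup>+ p. (\<integral>\<^sup>+ s. ennreal (indicator {x - d..x + d} s
                     * hY (s - c * fst p) (fst p) (y - c * snd p) (snd p)) \<partial>lborel) \<partial>lborel)"
    unfolding S_def
    by (rule nn_integral_cong_AE, rule AE_mp[OF AE_fiber_integrable], intro AE_I2 impI nn_integral_fiber_window)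
  also have "\<dots> = (\<integral>\<^sup>+ s. (\<integral>\<^sup>+ p. ennreal (indicator {x - d..x + d} s
                     * hY (s - c * fst p) (fst p) (y - c * snd p) (snd p)) \<partial>lborel) \<partial>lborel)"
  proof (rule lborel_pair.Fubini'[symmetric])
    have "(\<lambda>(p, s). ennreal (indicator {x - d..x + d} s * hY (s - c * fst p) (fst p) (y - c * snd p) (snd p)))
           \<in> borel_measurable ((borel \<Otimes>\<^sub>M borel) \<Otimes>\<^sub>M (borel :: real measure))"
      by measurable
    thus "(\<lambda>(p, s). ennreal (indicator {x - d..x + d} s * hY (s - c * fst p) (fst p) (y - c * snd p) (snd p)))
           \<in> borel_measurable ((lborel :: (real \<times> real) measure) \<Otimes>\<^sub>M lborel)"
      by (subst measurable_cong_sets[OF sets_lborel_pair_real2_real refl])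
  qed
  also have "\<dots> = (\<integral>\<^sup>+ s. ennreal (indicator {x - d..x + d} s * dens_cdf c s y) \<partial>lborel)"
    by (intro nn_integral_cong nn_integral_hY_shift) simp
  finally show ?thesis .
qed

lemma emeasure_window:
  "emeasure P {z \<in> space P. \<bar>\<mu> z + c * \<eta> z - x\<bar> \<le> d}
     = (\<integral>\<^sup>+ s. ennreal (indicator {x - d..x + d} s * dens c s) \<partial>lborel)"
proof -
  define E where "E n = {z \<in> space P. \<pi> z + c * \<gamma> z \<le> real n \<and> \<bar>\<mu> z + c * \<eta> z - x\<bar> \<le> d}" for n
  have "E n \<in> sets P" for n unfolding E_def by measurable
  then have "range E \<subseteq> sets P" by auto
  moreover have "incseq E" unfolding E_def incseq_def by (auto intro: order_trans)
  ultimately have "(\<lambda>n. emeasure P (E n)) \<longlonglongrightarrow> emeasure P (\<Union> (range E))"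
    by (rule Lim_emeasure_incseq)
  moreover have "\<Union> (range E) = {z \<in> space P. \<bar>\<mu> z + c * \<eta> z - x\<bar> \<le> d}"
  proof safe
    fix z assume z: "z \<in> space P" "\<bar>\<mu> z + c * \<eta> z - x\<bar> \<le> d"
    obtain n :: nat where "\<pi> z + c * \<gamma> z \<le> real n"
      using real_arch_simple by blast
    thus "z \<in> \<Union> (range E)" using z unfolding E_def by auto
  qed (auto simp: E_def)
  moreover have "(\<lambda>n. emeasure P (E n)) \<longlonglongrightarrow> (\<integral>\<^sup>+ s. ennreal (indicator {x - d..x + d} s * dens c s) \<partial>lborel)"
    unfolding E_def emeasure_joint_window
  proof (rule nn_integral_LIMSEQ)
    show "incseq (\<lambda>n s. ennreal (indicator {x - d..x + d} s * dens_cdf c s (real n)))"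
      by (auto simp: incseq_def le_fun_def intro!: ennreal_leI mult_left_mono dens_cdf_mono)
    have "(\<lambda>s. dens_cdf c s (real n)) \<in> borel_measurable borel" for n
      by (rule borel_measurable_continuous_onI[OF continuous_on_dens_cdf_x])
    thus "\<And>n. (\<lambda>s. ennreal (indicator {x - d..x + d} s * dens_cdf c s (real n))) \<in> borel_measurable lborel"
      by measurable
    show "(\<lambda>n. ennreal (indicator {x - d..x + d} s * dens_cdf c s (real n)))
        \<longlonglongrightarrow> ennreal (indicator {x - d..x + d} s * dens c s)" for s
      by (intro tendsto_ennrealI tendsto_mult_left dens_cdf_tendsto)
  qed
  ultimately show ?thesis using LIMSEQ_unique by metis
qed

lemma measure_eq_integral_of_emeasure_eq:
  fixes g :: "real \<Rightarrow> real"
  assumes "emeasure P A = (\<integral>\<^sup>+ s. ennreal (indicator {x - d..x + d} s * g s) \<partial>lborel)"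
    and "continuous_on UNIV g" and "\<And>s. g s \<ge> 0"
  shows "measure P A = (\<integral>s. indicator {x - d..x + d} s * g s \<partial>lborel)"
proof -
  have "integrable lborel (\<lambda>s. indicator {x - d..x + d} s * g s)"
    using borel_integrable_compact[of "{x - d..x + d}" g] assms(2) by (auto intro: continuous_on_subset)
  then have "emeasure P A = ennreal (\<integral>s. indicator {x - d..x + d} s * g s \<partial>lborel)"
    unfolding assms(1) by (rule nn_integral_eq_integral) (simp add: assms(3))
  moreover have "(\<integral>s. indicator {x - d..x + d} s * g s \<partial>lborel) \<ge> 0"
    by (intro Bochner_Integration.integral_nonneg) (simp add: assms(3))
  ultimately show ?thesis unfolding measure_def by simp
qed

lemma tendsto_joint_window:
  "((\<lambda>d. measure P {z \<in> space P. \<pi> z + c * \<gamma> z \<le> y \<and> \<bar>\<mu> z + c * \<eta> z - x\<bar> \<le> d} / (2 * d))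
     \<longlongrightarrow> dens_cdf c x y) (at_right 0)"
proof -
  have "\<bar>dens_cdf c s y - dens_cdf c x y\<bar> \<le> (2 * K) * \<bar>s - x\<bar>" for s
    using dens_cdf_lipschitz[of c s y c x y] by (simp add: mult_ac)
  then show ?thesis
    unfolding measure_eq_integral_of_emeasure_eq[OF emeasure_joint_window continuous_on_dens_cdf_x dens_cdf_nonneg]
    by (rule tendsto_interval_average[OF continuous_on_dens_cdf_x])
qed

lemma tendsto_window:
  "((\<lambda>d. measure P {z \<in> space P. \<bar>\<mu> z + c * \<eta> z - x\<bar> \<le> d} / (2 * d)) \<longlongrightarrow> dens c x) (at_right 0)"
proof -
  have "\<bar>dens c s - dens c x\<bar> \<le> (2 * K) * \<bar>s - x\<bar>" for s
    using dens_lipschitz[of c s c x] by (simp add: mult_ac)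
  then show ?thesis
    unfolding measure_eq_integral_of_emeasure_eq[OF emeasure_window continuous_on_dens dens_nonneg]
    by (rule tendsto_interval_average[OF continuous_on_dens])
qed

lemma joint_dens_cdf_eq: "joint_dens_cdf P (\<lambda>z. \<mu> z + c * \<eta> z) (\<lambda>z. \<pi> z + c * \<gamma> z) x y = dens_cdf c x y"
  unfolding joint_dens_cdf_def using tendsto_joint_window by (intro tendsto_Lim) auto

lemma pt_density_eq: "pt_density P (\<lambda>z. \<mu> z + c * \<eta> z) x = dens c x"
  unfolding pt_density_def using tendsto_window by (intro tendsto_Lim) auto

lemma cond_cdf_eq:
  assumes "dens c x \<noteq> 0"
  shows "cond_cdf P (\<lambda>z. \<mu> z + c * \<eta> z) (\<lambda>z. \<pi> z + c * \<gamma> z) x y = dens_cdf c x y / dens c x"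
  unfolding cond_cdf_def
proof (intro tendsto_Lim)
  let ?A = "\<lambda>d. measure P {z \<in> space P. \<pi> z + c * \<gamma> z \<le> y \<and> \<bar>\<mu> z + c * \<eta> z - x\<bar> \<le> d}"
  let ?B = "\<lambda>d. measure P {z \<in> space P. \<bar>\<mu> z + c * \<eta> z - x\<bar> \<le> d}"
  have "((\<lambda>d. (?A d / (2 * d)) / (?B d / (2 * d))) \<longlongrightarrow> dens_cdf c x y / dens c x) (at_right 0)"
    by (rule tendsto_divide[OF tendsto_joint_window tendsto_window assms])
  moreover have "\<forall>\<^sub>F d in at_right 0. (?A d / (2 * d)) / (?B d / (2 * d)) = ?A d / ?B d"
    using eventually_at_right_less[of 0] by eventually_elim (auto simp: field_simps)
  ultimately show "((\<lambda>d. ?A d / ?B d) \<longlongrightarrow> dens_cdf c x y / dens c x) (at_right 0)"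
    by (rule Lim_transform_eventually)
qed simp

lemma deriv_cond_cdf_x:
  assumes nz: "dens c x \<noteq> 0"
  shows "deriv (\<lambda>x'. cond_cdf P (\<lambda>z. \<mu> z + c * \<eta> z) (\<lambda>z. \<pi> z + c * \<gamma> z) x' y) x
         = (dens_cdf_dx c x y * dens c x - dens_cdf c x y * dens_dx c x) / (dens c x * dens c x)"
proof (rule DERIV_imp_deriv, rule has_field_derivative_transform_within_open)
  show "((\<lambda>s. dens_cdf c s y / dens c s) has_real_derivative
      (dens_cdf_dx c x y * dens c x - dens_cdf c x y * dens_dx c x) / (dens c x * dens c x)) (at x)"
    by (rule DERIV_divide[OF has_real_derivative_dens_cdf_x has_real_derivative_dens nz])
  show "open {s. dens c s \<noteq> 0}"
    using continuous_on_dens by (intro open_Collect_neq) (auto intro: continuous_intros)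
qed (use nz cond_cdf_eq in auto)

lemma deriv_cond_cdf_y:
  assumes nz: "dens c x \<noteq> 0"
  shows "deriv (\<lambda>y'. cond_cdf P (\<lambda>z. \<mu> z + c * \<eta> z) (\<lambda>z. \<pi> z + c * \<gamma> z) x y') y
         = dens_cdf_dy c x y / dens c x"
  unfolding cond_cdf_eq[OF nz]
  by (rule DERIV_imp_deriv, rule DERIV_cdivide[OF has_real_derivative_dens_cdf_y])

text \<open>At \<open>c = 0\<close> the quantities no longer depend on \<open>\<eta>\<close>, \<open>\<gamma>\<close>, \<open>h\<close>.\<close>

lemma dens_zero: "dens 0 = pt_density P \<mu>"
  using pt_density_eq[of 0] by auto

lemma dens_dx_zero: "dens_dx 0 x = deriv (pt_density P \<mu>) x"
  using has_real_derivative_dens[of 0 x] unfolding dens_zero by (rule DERIV_imp_deriv[symmetric])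

lemma dens_cdf_zero: "dens_cdf 0 x y = joint_dens_cdf P \<mu> \<pi> x y"
  using joint_dens_cdf_eq[of 0] by simp

lemma dens_cdf_dx_zero: "dens_cdf_dx 0 x y = deriv (\<lambda>s. joint_dens_cdf P \<mu> \<pi> s y) x"
  using has_real_derivative_dens_cdf_x[of 0 y x] unfolding dens_cdf_zero by (rule DERIV_imp_deriv[symmetric])

lemma dens_cdf_dy_zero: "dens_cdf_dy 0 x y = deriv (joint_dens_cdf P \<mu> \<pi> x) y"
  using has_real_derivative_dens_cdf_y[of 0 x] unfolding dens_cdf_zero by (rule DERIV_imp_deriv[symmetric])

lemma dens_cdf_near_zero:
  "\<bar>dens_cdf c x y - joint_dens_cdf P \<mu> \<pi> x0 y0\<bar> \<le> (\<bar>x - x0\<bar> + \<bar>y - y0\<bar> + \<bar>c\<bar>) * (2 * K)"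
  using dens_cdf_lipschitz[of c x y 0 x0 y0] by (simp add: dens_cdf_zero)

lemma dens_cdf_dx_near_zero:
  "\<bar>dens_cdf_dx c x y - deriv (\<lambda>s. joint_dens_cdf P \<mu> \<pi> s y0) x0\<bar> \<le> (\<bar>x - x0\<bar> + \<bar>y - y0\<bar> + \<bar>c\<bar>) * (2 * K)"
  using dens_cdf_dx_lipschitz[of c x y 0 x0 y0] by (simp add: dens_cdf_dx_zero)

lemma dens_cdf_dy_near_zero:
  "\<bar>dens_cdf_dy c x y - deriv (joint_dens_cdf P \<mu> \<pi> x0) y0\<bar> \<le> (\<bar>x - x0\<bar> + \<bar>y - y0\<bar> + \<bar>c\<bar>) * (2 * K)"
  using dens_cdf_dy_lipschitz[of c x y 0 x0 y0] by (simp add: dens_cdf_dy_zero)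

lemma dens_near_zero: "\<bar>dens c x - pt_density P \<mu> x0\<bar> \<le> (\<bar>x - x0\<bar> + \<bar>c\<bar>) * (2 * K)"
  using dens_lipschitz[of c x 0 x0] by (simp add: dens_zero)

lemma dens_dx_near_zero: "\<bar>dens_dx c x - deriv (pt_density P \<mu>) x0\<bar> \<le> (\<bar>x - x0\<bar> + \<bar>c\<bar>) * (2 * K)"
  using dens_dx_lipschitz[of c x 0 x0] by (simp add: dens_dx_zero)

lemma deriv_cond_cdf_x_zero:
  assumes "pt_density P \<mu> x \<noteq> 0"
  shows "deriv (\<lambda>x'. cond_cdf P \<mu> \<pi> x' y) x
    = (deriv (\<lambda>s. joint_dens_cdf P \<mu> \<pi> s y) x * pt_density P \<mu> x
         - joint_dens_cdf P \<mu> \<pi> x y * deriv (pt_density P \<mu>) x) / (pt_density P \<mu> x * pt_density P \<mu> x)"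
  using deriv_cond_cdf_x[of 0 x y] assms
  by (simp add: dens_zero dens_dx_zero dens_cdf_zero dens_cdf_dx_zero)

lemma deriv_cond_cdf_y_zero:
  assumes "pt_density P \<mu> x \<noteq> 0"
  shows "deriv (\<lambda>y'. cond_cdf P \<mu> \<pi> x y') y = deriv (joint_dens_cdf P \<mu> \<pi> x) y / pt_density P \<mu> x"
  using deriv_cond_cdf_y[of 0 x y] assms by (simp add: dens_zero dens_cdf_dy_zero)

end

lemma cond_cdf_derivs_tendsto:
  fixes \<mu> \<pi> :: "'a \<Rightarrow> real" and \<eta> \<gamma> :: "nat \<Rightarrow> 'a \<Rightarrow> real"
  assumes sjd: "\<And>m. m \<ge> N \<Longrightarrow> smooth_joint_density P \<mu> (\<eta> m) \<pi> (\<gamma> m) (h m) (hb m) (hbY m) K"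
    and c: "c \<longlonglongrightarrow> 0" and xs: "xs \<longlonglongrightarrow> x" and ys: "ys \<longlonglongrightarrow> y"
    and nz: "pt_density P \<mu> x \<noteq> 0"
  shows "(\<lambda>m. deriv (\<lambda>x'. cond_cdf P (\<lambda>z. \<mu> z + c m * \<eta> m z) (\<lambda>z. \<pi> z + c m * \<gamma> m z) x' (ys m)) (xs m))
           \<longlonglongrightarrow> deriv (\<lambda>x'. cond_cdf P \<mu> \<pi> x' y) x"
    and "(\<lambda>m. deriv (\<lambda>y'. cond_cdf P (\<lambda>z. \<mu> z + c m * \<eta> m z) (\<lambda>z. \<pi> z + c m * \<gamma> m z) (xs m) y') (ys m))
           \<longlonglongrightarrow> deriv (\<lambda>y'. cond_cdf P \<mu> \<pi> x y') y"
proof -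
  have lim: "smooth_joint_density P \<mu> (\<eta> N) \<pi> (\<gamma> N) (h N) (hb N) (hbY N) K" by (rule sjd) simp
  define e where "e m = (\<bar>xs m - x\<bar> + \<bar>ys m - y\<bar> + \<bar>c m\<bar>) * (2 * K)" for m
  have "e \<longlonglongrightarrow> (\<bar>x - x\<bar> + \<bar>y - y\<bar> + \<bar>0\<bar>) * (2 * K)"
    unfolding e_def by (intro tendsto_intros xs ys c)
  then have e: "e \<longlonglongrightarrow> 0" by simp
  have le_e: "(\<bar>xs m - x\<bar> + \<bar>c m\<bar>) * (2 * K) \<le> e m" for m
    unfolding e_def using smooth_joint_density.K_nonneg[OF lim] by (intro mult_right_mono) auto
  let ?F = "\<lambda>m. smooth_joint_density.dens_cdf (h m) (c m) (xs m) (ys m)"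
  let ?Fx = "\<lambda>m. smooth_joint_density.dens_cdf_dx (h m) (c m) (xs m) (ys m)"
  let ?Fy = "\<lambda>m. smooth_joint_density.dens_cdf_dy (h m) (c m) (xs m) (ys m)"
  let ?f = "\<lambda>m. smooth_joint_density.dens (h m) (c m) (xs m)"
  let ?fx = "\<lambda>m. smooth_joint_density.dens_dx (h m) (c m) (xs m)"
  have F: "?F \<longlonglongrightarrow> joint_dens_cdf P \<mu> \<pi> x y"
    and Fx: "?Fx \<longlonglongrightarrow> deriv (\<lambda>s. joint_dens_cdf P \<mu> \<pi> s y) x"
    and Fy: "?Fy \<longlonglongrightarrow> deriv (joint_dens_cdf P \<mu> \<pi> x) y"
    by (rule LIMSEQ_of_abs_diff_le[OF _ e], unfold e_def, erule smooth_joint_density.dens_cdf_near_zero[OF sjd]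
        smooth_joint_density.dens_cdf_dx_near_zero[OF sjd] smooth_joint_density.dens_cdf_dy_near_zero[OF sjd])+
  have f: "?f \<longlonglongrightarrow> pt_density P \<mu> x" and fx: "?fx \<longlonglongrightarrow> deriv (pt_density P \<mu>) x"
    by (rule LIMSEQ_of_abs_diff_le[OF _ e], erule order_trans[OF smooth_joint_density.dens_near_zero[OF sjd] le_e]
        order_trans[OF smooth_joint_density.dens_dx_near_zero[OF sjd] le_e])+
  have ev: "\<forall>\<^sub>F m in sequentially. m \<ge> N \<and> ?f m \<noteq> 0"
    using eventually_ge_at_top tendsto_imp_eventually_ne[OF f nz] by (rule eventually_conj)
  have "(\<lambda>m. (?Fx m * ?f m - ?F m * ?fx m) / (?f m * ?f m))
      \<longlonglongrightarrow> deriv (\<lambda>x'. cond_cdf P \<mu> \<pi> x' y) x"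
    unfolding smooth_joint_density.deriv_cond_cdf_x_zero[OF lim nz] using nz by (intro tendsto_intros F Fx f fx) auto
  then show "(\<lambda>m. deriv (\<lambda>x'. cond_cdf P (\<lambda>z. \<mu> z + c m * \<eta> m z) (\<lambda>z. \<pi> z + c m * \<gamma> m z) x' (ys m)) (xs m))
      \<longlonglongrightarrow> deriv (\<lambda>x'. cond_cdf P \<mu> \<pi> x' y) x"
    by (rule Lim_transform_eventually)
       (use ev in \<open>eventually_elim, simp add: smooth_joint_density.deriv_cond_cdf_x[OF sjd]\<close>)
  have "(\<lambda>m. ?Fy m / ?f m) \<longlonglongrightarrow> deriv (\<lambda>y'. cond_cdf P \<mu> \<pi> x y') y"
    unfolding smooth_joint_density.deriv_cond_cdf_y_zero[OF lim nz] using nz by (intro tendsto_intros Fy f)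
  then show "(\<lambda>m. deriv (\<lambda>y'. cond_cdf P (\<lambda>z. \<mu> z + c m * \<eta> m z) (\<lambda>z. \<pi> z + c m * \<gamma> m z) (xs m) y') (ys m))
      \<longlonglongrightarrow> deriv (\<lambda>y'. cond_cdf P \<mu> \<pi> x y') y"
    by (rule Lim_transform_eventually)
       (use ev in \<open>eventually_elim, simp add: smooth_joint_density.deriv_cond_cdf_y[OF sjd]\<close>)
qed

lemma eventually_smooth_joint_density:
  fixes h :: "nat \<Rightarrow> real \<Rightarrow> real \<Rightarrow> real \<Rightarrow> real \<Rightarrow> real"
  assumes P: "prob_space P"
    and dens: "\<exists>N. \<forall>m\<ge>N.
         (\<forall>x u y v. h m x u y v \<ge> 0)
       \<and> distributed P (lborel :: (real \<times> real \<times> real \<times> real) measure)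
           (\<lambda>z. (\<mu> z, \<eta> m z, \<pi> z, \<gamma> m z)) (\<lambda>(x, u, y, v). ennreal (h m x u y v))
       \<and> (\<forall>x u y v. (\<lambda>x'. h m x' u y v) differentiable (at x))
       \<and> (\<forall>x u y v. (\<lambda>y'. h m x u y' v) differentiable (at y))
       \<and> (\<forall>x u y v. (\<lambda>x'. int_upto (h m) x' u y v) differentiable (at x))
       \<and> (\<forall>x u y v. (\<lambda>x'. deriv (\<lambda>x''. int_upto (h m) x'' u y v) x') differentiable (at x))"
      (is "\<exists>N. \<forall>m\<ge>N. ?dens m")
    and bounds: "\<exists>N (hb :: nat \<Rightarrow> nat \<Rightarrow> real \<Rightarrow> real \<Rightarrow> real) (hbY :: nat \<Rightarrow> nat \<Rightarrow> real \<Rightarrow> real \<Rightarrow> real). \<exists>K::real.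
         (\<forall>m\<ge>N.
            (\<forall>i\<le>2. \<forall>u v. hb m i u v \<ge> 0 \<and> hbY m i u v \<ge> 0)
          \<and> (\<forall>i\<le>2. (\<lambda>(u, v). hb m i u v) \<in> borel_measurable lborel
                   \<and> (\<lambda>(u, v). hbY m i u v) \<in> borel_measurable lborel)
          \<and> (\<forall>x u y v.
               h m x u y v \<le> hb m 0 u v
             \<and> \<bar>deriv (\<lambda>x'. h m x' u y v) x\<bar> \<le> hb m 1 u v
             \<and> \<bar>deriv (\<lambda>y'. h m x u y' v) y\<bar> \<le> hb m 2 u v
             \<and> int_upto (h m) x u y v \<le> hbY m 0 u v
             \<and> \<bar>deriv (\<lambda>x'. int_upto (h m) x' u y v) x\<bar> \<le> hbY m 1 u v
             \<and> \<bar>deriv (\<lambda>x'. deriv (\<lambda>x''. int_upto (h m) x'' u y v) x') x\<bar> \<le> hbY m 2 u v)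
          \<and> (\<forall>i\<le>2. \<forall>r::nat\<in>{1,2}.
               (\<integral>\<^sup>+ (u, v). ennreal ((1 + \<bar>u\<bar> + \<bar>v\<bar>) ^ r * hb m i u v)
                   \<partial>(lborel :: (real \<times> real) measure)) \<le> ennreal K
             \<and> (\<integral>\<^sup>+ (u, v). ennreal ((1 + \<bar>u\<bar> + \<bar>v\<bar>) ^ r * hbY m i u v)
                   \<partial>(lborel :: (real \<times> real) measure)) \<le> ennreal K))"
      (is "\<exists>N hb hbY K. \<forall>m\<ge>N. ?bounds m hb hbY K")
  shows "\<exists>N hb hbY K. \<forall>m\<ge>N. smooth_joint_density P \<mu> (\<eta> m) \<pi> (\<gamma> m) (h m) (hb m) (hbY m) K"
proof -
  obtain N1 where N1: "\<forall>m\<ge>N1. ?dens m" using dens by (rule exE)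
  obtain N2 hb hbY K where N2: "\<forall>m\<ge>N2. ?bounds m hb hbY K" using bounds by blast
  have "smooth_joint_density P \<mu> (\<eta> m) \<pi> (\<gamma> m) (h m) (hb m) (hbY m) (max K 0)" if m: "m \<ge> max N1 N2" for m
  proof -
    have "ennreal K \<le> ennreal (max K 0)" by (rule ennreal_leI) simp
    with N2[rule_format, of m] m have "(\<integral>\<^sup>+ (u, v). ennreal ((1 + \<bar>u\<bar> + \<bar>v\<bar>) * hb m i u v) \<partial>lborel) \<le> ennreal (max K 0)
        \<and> (\<integral>\<^sup>+ (u, v). ennreal ((1 + \<bar>u\<bar> + \<bar>v\<bar>) * hbY m i u v) \<partial>lborel) \<le> ennreal (max K 0)"
      if "i \<le> 2" for i
      using that by (fastforce dest: order_trans)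
    with N1[rule_format, of m] N2[rule_format, of m] m show ?thesis
      by (intro smooth_joint_density.intro[OF P]) simp_all
  qed
  then show ?thesis by blast
qed

theorem lemma3:
  fixes P :: "(real ^ 'd) measure"
    and M :: "'w measure"
    and mu pi :: "real ^ 'd \<Rightarrow> real"
    and mt pt :: "nat \<Rightarrow> 'w \<Rightarrow> real ^ 'd \<Rightarrow> real"
    and a :: "nat \<Rightarrow> real"
    and h :: "nat \<Rightarrow> 'w \<Rightarrow> real \<Rightarrow> real \<Rightarrow> real \<Rightarrow> real \<Rightarrow> real"
  assumes P: "prob_space P"
    and M: "prob_space M"
    and mu_meas: "mu \<in> borel_measurable P"
    and pi_meas: "pi \<in> borel_measurable P"
    and fit_meas: "\<And>m w. w \<in> space M \<Longrightarrow> mt m w \<in> borel_measurable P \<and> pt m w \<in> borel_measurable P"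
    and a_pos: "\<And>m. a m > 0"
    and a_lim: "a \<longlonglongrightarrow> 0"
    \<comment> \<open>Assumption (A): stochastic boundedness O_P(a_m) of the sup-norm errors (over the fitting randomness)\<close>
    and A_mu: "\<And>e. e > 0 \<Longrightarrow> \<exists>C N. \<forall>m\<ge>N. \<exists>B\<in>sets M. prob_space.prob M B \<ge> 1 - e \<and>
                 (\<forall>w\<in>B. ess_norm P (\<lambda>z. mt m w z - mu z) \<le> ereal (C * a m))"
    and A_pi: "\<And>e. e > 0 \<Longrightarrow> \<exists>C N. \<forall>m\<ge>N. \<exists>B\<in>sets M. prob_space.prob M B \<ge> 1 - e \<and>
                 (\<forall>w\<in>B. ess_norm P (\<lambda>z. pt m w z - pi z) \<le> ereal (C * a m))"
    \<comment> \<open>density hypotheses, conditionally on the fitted functions (i.e. for every realisation w)\<close>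
    and dens: "\<And>w. w \<in> space M \<Longrightarrow> \<exists>N. \<forall>m\<ge>N.
         (\<forall>x u y v. h m w x u y v \<ge> 0)
       \<and> distributed P (lborel :: (real \<times> real \<times> real \<times> real) measure)
           (\<lambda>z. (mu z, (mt m w z - mu z) / a m, pi z, (pt m w z - pi z) / a m))
           (\<lambda>(x, u, y, v). ennreal (h m w x u y v))
       \<and> (\<forall>x u y v. (\<lambda>x'. h m w x' u y v) differentiable (at x))
       \<and> (\<forall>x u y v. (\<lambda>y'. h m w x u y' v) differentiable (at y))
       \<and> (\<forall>x u y v. (\<lambda>x'. int_upto (h m w) x' u y v) differentiable (at x))
       \<and> (\<forall>x u y v. (\<lambda>x'. deriv (\<lambda>x''. int_upto (h m w) x'' u y v) x') differentiable (at x))"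
    and bounds: "\<And>w. w \<in> space M \<Longrightarrow> \<exists>N (hb :: nat \<Rightarrow> nat \<Rightarrow> real \<Rightarrow> real \<Rightarrow> real) (hbY :: nat \<Rightarrow> nat \<Rightarrow> real \<Rightarrow> real \<Rightarrow> real). \<exists>K::real.
         (\<forall>m\<ge>N.
            (\<forall>i\<le>2. \<forall>u v. hb m i u v \<ge> 0 \<and> hbY m i u v \<ge> 0)
          \<and> (\<forall>i\<le>2. (\<lambda>(u, v). hb m i u v) \<in> borel_measurable lborel
                   \<and> (\<lambda>(u, v). hbY m i u v) \<in> borel_measurable lborel)
          \<and> (\<forall>x u y v.
               h m w x u y v \<le> hb m 0 u v
             \<and> \<bar>deriv (\<lambda>x'. h m w x' u y v) x\<bar> \<le> hb m 1 u v
             \<and> \<bar>deriv (\<lambda>y'. h m w x u y' v) y\<bar> \<le> hb m 2 u v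
             \<and> int_upto (h m w) x u y v \<le> hbY m 0 u v
             \<and> \<bar>deriv (\<lambda>x'. int_upto (h m w) x' u y v) x\<bar> \<le> hbY m 1 u v
             \<and> \<bar>deriv (\<lambda>x'. deriv (\<lambda>x''. int_upto (h m w) x'' u y v) x') x\<bar> \<le> hbY m 2 u v)
          \<and> (\<forall>i\<le>2. \<forall>r::nat\<in>{1,2}.
               (\<integral>\<^sup>+ (u, v). ennreal ((1 + \<bar>u\<bar> + \<bar>v\<bar>) ^ r * hb m i u v)
                   \<partial>(lborel :: (real \<times> real) measure)) \<le> ennreal K
             \<and> (\<integral>\<^sup>+ (u, v). ennreal ((1 + \<bar>u\<bar> + \<bar>v\<bar>) ^ r * hbY m i u v)
                   \<partial>(lborel :: (real \<times> real) measure)) \<le> ennreal K))"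
  shows "\<forall>w\<in>space M. \<forall>(xs :: nat \<Rightarrow> real) (ys :: nat \<Rightarrow> real) x y.
           (\<lambda>m. (xs m, ys m)) \<longlonglongrightarrow> (x, y) \<longrightarrow> pt_density P mu x \<noteq> 0 \<longrightarrow>
             (\<lambda>m. deriv (\<lambda>x'. cond_cdf P (mt m w) (pt m w) x' (ys m)) (xs m))
                \<longlonglongrightarrow> deriv (\<lambda>x'. cond_cdf P mu pi x' y) x
           \<and> (\<lambda>m. deriv (\<lambda>y'. cond_cdf P (mt m w) (pt m w) (xs m) y') (ys m))
                \<longlonglongrightarrow> deriv (\<lambda>y'. cond_cdf P mu pi x y') y"
proof (intro ballI allI impI)
  fix w and xs ys :: "nat \<Rightarrow> real" and x y :: real
  assume w: "w \<in> space M" and xy: "(\<lambda>m. (xs m, ys m)) \<longlonglongrightarrow> (x, y)" and nz: "pt_density P mu x \<noteq> 0"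
  define \<eta> where "\<eta> = (\<lambda>m z. (mt m w z - mu z) / a m)"
  define \<gamma> where "\<gamma> = (\<lambda>m z. (pt m w z - pi z) / a m)"
  obtain N hb hbY K where sjd:
    "\<And>m. m \<ge> N \<Longrightarrow> smooth_joint_density P mu (\<eta> m) pi (\<gamma> m) (h m w) (hb m) (hbY m) K"
    using eventually_smooth_joint_density[OF P dens[OF w] bounds[OF w]] unfolding \<eta>_def \<gamma>_def by blast
  have xs: "xs \<longlonglongrightarrow> x" and ys: "ys \<longlonglongrightarrow> y"
    using tendsto_fst[OF xy] tendsto_snd[OF xy] by simp_all
  have mt: "(\<lambda>z. mu z + a m * \<eta> m z) = mt m w" and pt: "(\<lambda>z. pi z + a m * \<gamma> m z) = pt m w" for m
    using a_pos[of m] by (simp_all add: \<eta>_def \<gamma>_def fun_eq_iff)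
  show "(\<lambda>m. deriv (\<lambda>x'. cond_cdf P (mt m w) (pt m w) x' (ys m)) (xs m))
          \<longlonglongrightarrow> deriv (\<lambda>x'. cond_cdf P mu pi x' y) x
      \<and> (\<lambda>m. deriv (\<lambda>y'. cond_cdf P (mt m w) (pt m w) (xs m) y') (ys m))
          \<longlonglongrightarrow> deriv (\<lambda>y'. cond_cdf P mu pi x y') y"
    using cond_cdf_derivs_tendsto[where \<eta>=\<eta> and \<gamma>=\<gamma> and h="\<lambda>m. h m w" and hb=hb and hbY=hbY,
        OF sjd a_lim xs ys nz]
    unfolding mt pt by blast
qed

end
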